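(* Let $(\mathcal{X},d)$ be a Polish metric space and let $(X_N)_{N\in\mathbb{N}}$ be a Markov chain on $\mathcal{X}$ with transition kernel $(P_x)_{x\in\mathcal{X}}$, where $x\mapsto P_x$ is measurable and each $P_x$ has finite first moment. Assume there exists $\kappa>0$ such that $W_1(P_x,P_y)\le(1-\kappa)\,d(x,y)$ for all $x,y\in\mathcal{X}$, and let $\pi$ be the invariant probability measure. Let $T\ge1$, $T_0\ge0$ be integers and $\hat\pi(f):=\frac1T\sum_{k=T_0+1}^{T_0+T}f(X_k)$. Assume there is a Lipschitz function $S:\mathcal{X}\to\mathbb{R}$ with $\|S\|_{\mathrm{Lip}}\le C$ such that $\frac{\sigma(x)^2}{n_x\kappa}\le S(x)$ for all $x\in\mathcal{X}$. Then for every Lipschitz $f$ and every $x\in\mathcal{X}$, \[ \operatorname{Var}_x\hat\pi(f)\le \begin{cases} \dfrac{\|f\|_{\mathrm{Lip}}^2}{\kappa T}\Big(\mathbb{E}_\pi S+\dfrac{C}{\kappa T}E(x)\Big), & \text{if } T_0=0,\\[2mm] \dfrac{\|f\|_{\mathrm{Lip}}^2}{\kappa T}\Big(\big(1+\dfrac{1}{\kappa T}\big)\mathbb{E}_\pi S+\dfrac{2C(1-\kappa)^{T_0}}{\kappa T}E(x)\Big), & \text{otherwise.} \end{cases} \]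
   Context: $W_1$ is the $L^1$ Wasserstein distance. $\operatorname{Var}_x$ is the variance for the chain started at $X_0=x$. $E(x):=\int d(x,y)\,\pi(dy)$ (eccentricity). $\sigma(x)^2:=\frac12\iint d(y,z)^2P_x(dy)P_x(dz)$; $n_x:=\inf\{\iint d(y,z)^2P_x(dy)P_x(dz)/\iint|f(y)-f(z)|^2P_x(dy)P_x(dz): f\ 1\text{-Lipschitz}\}$. $\|f\|_{\mathrm{Lip}}:=\sup_{x\ne y}|f(x)-f(y)|/d(x,y)$. *)

theory Defs
  imports "HOL-Analysis.Analysis" "HOL-Probability.Probability"
begin

text \<open>Lipschitz seminorm; the 0 is inserted only so that the value is 0 on a one-point space.\<close>
definition lip_norm :: "('a::metric_space \<Rightarrow> real) \<Rightarrow> real" where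
  "lip_norm f = Sup (insert 0 {\<bar>f x - f y\<bar> / dist x y | x y. x \<noteq> y})"

definition is_lipschitz :: "('a::metric_space \<Rightarrow> real) \<Rightarrow> bool" where
  "is_lipschitz f \<longleftrightarrow> (\<exists>L. lipschitz_on L UNIV f)"

definition couplings :: "'a::topological_space measure \<Rightarrow> 'a measure \<Rightarrow> ('a \<times> 'a) measure set" where
  "couplings \<mu> \<nu> = {\<gamma>. sets \<gamma> = sets (borel \<Otimes>\<^sub>M borel) \<and> prob_space \<gamma> \<and>
       distr \<gamma> borel fst = \<mu> \<and> distr \<gamma> borel snd = \<nu>}"

definition W1 :: "'a::metric_space measure \<Rightarrow> 'a measure \<Rightarrow> ereal" where
  "W1 \<mu> \<nu> = (INF \<gamma>\<in>couplings \<mu> \<nu>. enn2ereal (\<integral>\<^sup>+ p. ennreal (dist (fst p) (snd p)) \<partial>\<gamma>))"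

text \<open>Law of the path (X_0,...,X_n) of the Markov chain with kernel P started at X_0 = x,
  as a measure on extensional functions on {..n}.\<close>
fun chain_law :: "('a::topological_space \<Rightarrow> 'a measure) \<Rightarrow> 'a \<Rightarrow> nat \<Rightarrow> (nat \<Rightarrow> 'a) measure" where
  "chain_law P x 0 = return (PiM {..0} (\<lambda>_. borel)) (\<lambda>i\<in>{..0::nat}. x)"
| "chain_law P x (Suc n) = chain_law P x n \<bind>
     (\<lambda>\<omega>. distr (P (\<omega> n)) (PiM {..Suc n} (\<lambda>_. borel)) (\<lambda>y. fun_upd \<omega> (Suc n) y))"

definition sigma2 :: "('a::metric_space \<Rightarrow> 'a measure) \<Rightarrow> 'a \<Rightarrow> ennreal" where
  "sigma2 P x = (1/2) * (\<integral>\<^sup>+ y. \<integral>\<^sup>+ z. ennreal ((dist y z)\<^sup>2) \<partial>P x \<partial>P x)"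

definition n_loc :: "('a::metric_space \<Rightarrow> 'a measure) \<Rightarrow> 'a \<Rightarrow> ennreal" where
  "n_loc P x = (INF f\<in>{f. lipschitz_on 1 UNIV f}.
      (\<integral>\<^sup>+ y. \<integral>\<^sup>+ z. ennreal ((dist y z)\<^sup>2) \<partial>P x \<partial>P x) /
      (\<integral>\<^sup>+ y. \<integral>\<^sup>+ z. ennreal ((f y - f z)\<^sup>2) \<partial>P x \<partial>P x))"

definition eccentricity :: "'a::metric_space measure \<Rightarrow> 'a \<Rightarrow> real" where
  "eccentricity \<pi> x = (\<integral> y. dist x y \<partial>\<pi>)"

end

theory Submission
  imports Defs
begin

(* Write P g for the function z \<mapsto> \<integral> g dP_z.  Integrating against near-optimal couplings, the
   W1-contraction makes P map L-Lipschitz functions to L(1 - \<kappa>)-Lipschitz ones; and, by the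
   definition of the local dimension n_z, the hypothesis on S says that under P_z every L-Lipschitz
   function has variance at most \<kappa> L^2 S(z).

   Conditioning a sum f_0(X_0) + ... + f_{n+1}(X_{n+1}) on the first n steps bounds its variance by
   E[\<kappa> L_{n+1}^2 S(X_n)] plus the variance of the shorter sum in which f_n is replaced by
   f_n + P f_{n+1}, a function with Lipschitz constant L_n + (1 - \<kappa>) L_{n+1}.  Unwinding, the
   variance is at most \<Sum>_k \<kappa> H_k^2 E S(X_{k-1}) with H_k = \<Sum>_{j \<ge> k} (1 - \<kappa>)^{j-k} L_j, and for
   the ergodic average H_k \<le> |f|_Lip (1 - \<kappa>)^{T_0+1-k} / (\<kappa> T).  Finally
   E_x S(X_k) \<le> E_\<pi> S + C (1 - \<kappa>)^k E(x), because P^k S is C (1 - \<kappa>)^k-Lipschitz and has the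
   same \<pi>-mean as S; summing the geometric series gives both bounds.  For \<kappa> > 1 the contraction
   forces the space to be a single point. *)

section \<open>Lipschitz functions and elementary estimates\<close>

lemma lipschitz_on_UNIV_abs_diff_le:
  "L-lipschitz_on UNIV g \<Longrightarrow> \<bar>(g::'a::metric_space \<Rightarrow> real) y - g z\<bar> \<le> L * dist y z"
  using lipschitz_onD[of L UNIV g y z] by (simp add: dist_real_def)

lemma borel_measurable_lipschitz:
  "L-lipschitz_on UNIV g \<Longrightarrow> (g :: 'a::metric_space \<Rightarrow> real) \<in> borel_measurable borel"
  by (rule borel_measurable_continuous_onI[OF lipschitz_on_continuous_on])

lemma measurable_lipschitz_component:
  fixes g :: "'a::metric_space \<Rightarrow> real"
  assumes "L-lipschitz_on UNIV g" "k \<in> I"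
  shows "(\<lambda>\<omega>. g (\<omega> k)) \<in> borel_measurable (PiM I (\<lambda>_. borel))"
  by (rule measurable_compose[OF measurable_component_singleton[OF assms(2)] borel_measurable_lipschitz[OF assms(1)]])

lemma borel_measurable_sum_lipschitz:
  fixes f :: "nat \<Rightarrow> 'a::metric_space \<Rightarrow> real"
  assumes "\<And>k. (L k)-lipschitz_on UNIV (f k)"
  shows "(\<lambda>\<omega>. \<Sum>k\<le>n. f k (\<omega> k)) \<in> borel_measurable (PiM {..n} (\<lambda>_. borel))"
  by (rule borel_measurable_sum) (rule measurable_lipschitz_component[OF assms])

lemma integrable_lipschitz_if_integrable_dist:
  fixes g :: "'a::metric_space \<Rightarrow> real"
  assumes M: "prob_space M" "sets M = sets borel"
    and dist: "integrable M (\<lambda>y. dist x y)" and g: "L-lipschitz_on UNIV g"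
  shows "integrable M g"
proof (rule Bochner_Integration.integrable_bound[where f="\<lambda>y. \<bar>g x\<bar> + L * dist x y"])
  interpret prob_space M by (rule M(1))
  show "integrable M (\<lambda>y. \<bar>g x\<bar> + L * dist x y)" using dist by simp
  show "g \<in> borel_measurable M"
    using borel_measurable_lipschitz[OF g] measurable_cong_sets[OF M(2) refl] by blast
  show "AE y in M. norm (g y) \<le> norm (\<bar>g x\<bar> + L * dist x y)"
  proof (rule AE_I2)
    fix y
    have "\<bar>g y - g x\<bar> \<le> L * dist x y"
      using lipschitz_on_UNIV_abs_diff_le[OF g, of y x] by (simp add: dist_commute)
    moreover have "0 \<le> L * dist x y" using lipschitz_on_nonneg[OF g] by simp
    ultimately show "norm (g y) \<le> norm (\<bar>g x\<bar> + L * dist x y)" by simp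
  qed
qed

lemma lipschitz_on_dist_left: "1-lipschitz_on UNIV (\<lambda>y. dist (x::'a::metric_space) y)"
proof -
  have "\<bar>dist x y - dist x z\<bar> \<le> dist y z" for y z
    using dist_triangle[of x y z] dist_triangle[of x z y] by (simp add: dist_commute abs_le_iff)
  then show ?thesis by (simp add: lipschitz_on_def dist_real_def)
qed

lemma lipschitz_on_min_const:
  assumes "L-lipschitz_on UNIV (g::'a::metric_space \<Rightarrow> real)"
  shows "L-lipschitz_on UNIV (\<lambda>y. min (g y) M)"
proof -
  have "\<bar>min (g y) M - min (g z) M\<bar> \<le> L * dist y z" for y z
    using lipschitz_on_UNIV_abs_diff_le[OF assms, of y z] by (simp add: min_def abs_le_iff)
  then show ?thesis using assms by (simp add: lipschitz_on_def dist_real_def)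
qed

lemma lipschitz_on_lip_norm:
  fixes f :: "'a::metric_space \<Rightarrow> real"
  assumes "is_lipschitz f"
  shows "(lip_norm f)-lipschitz_on UNIV f"
proof -
  obtain L where L: "L-lipschitz_on UNIV f" using assms by (auto simp: is_lipschitz_def)
  define A where "A = insert 0 {\<bar>f x - f y\<bar> / dist x y | x y. x \<noteq> y}"
  have "a \<le> L" if "a \<in> A" for a
  proof -
    have "\<bar>f x - f y\<bar> / dist x y \<le> L" if "x \<noteq> y" for x y
      using lipschitz_on_UNIV_abs_diff_le[OF L, of x y] that by (simp add: divide_le_eq)
    then show ?thesis using \<open>a \<in> A\<close> lipschitz_on_nonneg[OF L] by (auto simp: A_def)
  qed
  then have bdd: "bdd_above A" by (auto simp: bdd_above_def)
  have lip_norm_eq: "lip_norm f = Sup A" by (simp add: lip_norm_def A_def)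
  have "0 \<le> lip_norm f" unfolding lip_norm_eq by (rule cSup_upper[OF _ bdd]) (simp add: A_def)
  moreover have "\<bar>f x - f y\<bar> \<le> lip_norm f * dist x y" for x y
  proof (cases "x = y")
    case False
    have "\<bar>f x - f y\<bar> / dist x y \<le> lip_norm f"
      unfolding lip_norm_eq by (rule cSup_upper[OF _ bdd]) (use False in \<open>auto simp: A_def\<close>)
    then show ?thesis using False by (simp add: divide_le_eq)
  qed simp
  ultimately show ?thesis by (simp add: lipschitz_on_def dist_real_def)
qed

lemma W1_nonneg: "0 \<le> W1 \<mu> \<nu>"
  unfolding W1_def by (rule INF_greatest) simp

lemma W1_contraction_gt_one_imp_eq:
  fixes P :: "'a::metric_space \<Rightarrow> 'a measure" and y z :: 'a
  assumes "\<And>y z. W1 (P y) (P z) \<le> ereal ((1 - \<kappa>) * dist y z)" and "1 < \<kappa>"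
  shows "y = z"
proof -
  have "0 \<le> (1 - \<kappa>) * dist y z"
    using order_trans[OF W1_nonneg assms(1)[of y z]] by simp
  with \<open>1 < \<kappa>\<close> have "dist y z \<le> 0" by (auto simp: zero_le_mult_iff)
  then show ?thesis by simp
qed

lemma sum_power_reverse_le:
  fixes r :: real assumes r: "0 \<le> r" "r < 1"
  shows "(\<Sum>k\<in>{1..m}. r ^ (m + 1 - k)) \<le> r / (1 - r)"
proof (induction m)
  case (Suc m)
  have "(\<Sum>k\<in>{1..Suc m}. r ^ (Suc m + 1 - k)) = r * (\<Sum>k\<in>{1..m}. r ^ (m + 1 - k)) + r"
    by (simp add: Suc_diff_le sum_distrib_left)
  also have "\<dots> \<le> r * (r / (1 - r)) + r" using mult_left_mono[OF Suc.IH r(1)] by simp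
  also have "\<dots> = r / (1 - r)" using r by (simp add: field_simps)
  finally show ?case .
qed (use r in simp)

lemma sum_power_shifted:
  fixes r :: real assumes "r \<noteq> 1"
  shows "(\<Sum>k\<in>{a+1..a+m}. r ^ (k - 1)) = r ^ a * (1 - r ^ m) / (1 - r)"
proof (induction m)
  case (Suc m)
  have "(\<Sum>k\<in>{a+1..a+Suc m}. r ^ (k - 1)) = (\<Sum>k\<in>{a+1..a+m}. r ^ (k - 1)) + r ^ (a + m)"
    by simp
  also have "\<dots> = r ^ a * (1 - r ^ Suc m) / (1 - r)"
    unfolding Suc using assms by (simp add: field_simps power_add)
  finally show ?case .
qed simp

lemma sum_weighted_powers_late_le:
  fixes \<rho> C D E :: real
  assumes \<rho>: "0 \<le> \<rho>" "\<rho> < 1" and C: "0 \<le> C" and D: "0 \<le> D"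
  shows "(\<Sum>k\<in>{a + 1..a + m}. (\<rho> ^ (a + 1 - k))\<^sup>2 * (E + C * \<rho> ^ (k - 1) * D))
           \<le> real m * E + C * D * \<rho> ^ a / (1 - \<rho>)"
proof -
  have "(\<Sum>k\<in>{a + 1..a + m}. (\<rho> ^ (a + 1 - k))\<^sup>2 * (E + C * \<rho> ^ (k - 1) * D))
      = real m * E + C * D * (\<Sum>k\<in>{a + 1..a + m}. \<rho> ^ (k - 1))"
    by (subst sum.cong[OF refl, of _ _ "\<lambda>k. E + C * D * \<rho> ^ (k - 1)"])
       (auto simp: sum.distrib sum_distrib_left)
  also have "(\<Sum>k\<in>{a + 1..a + m}. \<rho> ^ (k - 1)) = \<rho> ^ a * (1 - \<rho> ^ m) / (1 - \<rho>)"
    using sum_power_shifted[of \<rho> a m] \<rho> by simp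
  also have "\<dots> \<le> \<rho> ^ a / (1 - \<rho>)"
    using \<rho> by (simp add: divide_right_mono mult_left_le)
  finally show ?thesis using C D by (simp add: mult_left_mono)
qed

text \<open>Here \<open>m + 1 - k\<close> and \<open>k - 1\<close> add up to \<open>m\<close>, so the second summand is \<open>C D \<rho>\<^sup>m\<close> times a
  geometric sequence.\<close>

lemma sum_weighted_powers_early_le:
  fixes \<rho> C D E :: real
  assumes \<rho>: "0 \<le> \<rho>" "\<rho> < 1" and E: "0 \<le> E" and C: "0 \<le> C" and D: "0 \<le> D"
  shows "(\<Sum>k\<in>{1..m}. (\<rho> ^ (m + 1 - k))\<^sup>2 * (E + C * \<rho> ^ (k - 1) * D))
           \<le> (E + C * D * \<rho> ^ m) / (1 - \<rho>)"
proof -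
  have "(\<rho> ^ (m + 1 - k))\<^sup>2 * (E + C * \<rho> ^ (k - 1) * D) \<le> (E + C * D * \<rho> ^ m) * \<rho> ^ (m + 1 - k)"
    if "k \<in> {1..m}" for k
  proof -
    define e where "e = m + 1 - k"
    have e: "e + (k - 1) = m" using that by (auto simp: e_def)
    have "(\<rho> ^ e)\<^sup>2 * (E + C * \<rho> ^ (k - 1) * D) = (\<rho> ^ e)\<^sup>2 * E + (\<rho> ^ e)\<^sup>2 * (C * \<rho> ^ (k - 1) * D)"
      by (simp add: distrib_left)
    also have "(\<rho> ^ e)\<^sup>2 * (C * \<rho> ^ (k - 1) * D) = C * D * \<rho> ^ m * \<rho> ^ e"
      by (simp add: power2_eq_square e[symmetric] power_add algebra_simps)
    also have "(\<rho> ^ e)\<^sup>2 * E \<le> \<rho> ^ e * E"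
      using \<rho> E by (intro mult_right_mono) (simp_all add: power2_eq_square mult_left_le power_le_one)
    finally show ?thesis by (simp add: e_def algebra_simps)
  qed
  then have "(\<Sum>k\<in>{1..m}. (\<rho> ^ (m + 1 - k))\<^sup>2 * (E + C * \<rho> ^ (k - 1) * D))
      \<le> (\<Sum>k\<in>{1..m}. (E + C * D * \<rho> ^ m) * \<rho> ^ (m + 1 - k))"
    by (rule sum_mono)
  also have "\<dots> = (E + C * D * \<rho> ^ m) * (\<Sum>k\<in>{1..m}. \<rho> ^ (m + 1 - k))"
    by (simp add: sum_distrib_left)
  also have "\<dots> \<le> (E + C * D * \<rho> ^ m) * (1 / (1 - \<rho>))"
  proof (rule mult_left_mono)
    have "(\<Sum>k\<in>{1..m}. \<rho> ^ (m + 1 - k)) \<le> \<rho> / (1 - \<rho>)" by (rule sum_power_reverse_le[OF \<rho>])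
    also have "\<dots> \<le> 1 / (1 - \<rho>)" using \<rho> by (simp add: divide_right_mono)
    finally show "(\<Sum>k\<in>{1..m}. \<rho> ^ (m + 1 - k)) \<le> 1 / (1 - \<rho>)" .
  qed (use E C D \<rho> in simp)
  finally show ?thesis by simp
qed

lemma sum_atMost_fun_upd_add:
  fixes f :: "nat \<Rightarrow> 'c \<Rightarrow> 'b::comm_monoid_add" and n :: nat
  shows "(\<Sum>k\<le>n. (f(n := \<lambda>z. f n z + g z)) k (\<omega> k)) = (\<Sum>k\<le>n. f k (\<omega> k)) + g (\<omega> n)"
proof -
  have split: "(\<Sum>k\<le>n. h k) = (\<Sum>k<n. h k) + h n" for h :: "nat \<Rightarrow> 'b"
    by (simp flip: lessThan_Suc_atMost)
  have "(\<Sum>k<n. (f(n := \<lambda>z. f n z + g z)) k (\<omega> k)) = (\<Sum>k<n. f k (\<omega> k))"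
    by (intro sum.cong) auto
  then show ?thesis by (simp only: split) (simp add: ac_simps)
qed

lemma (in prob_space) integral_square_diff_const:
  fixes u :: "'a \<Rightarrow> real"
  assumes "integrable M u" "integrable M (\<lambda>x. (u x)\<^sup>2)"
  shows "(\<integral>x. (u x - c)\<^sup>2 \<partial>M) = (\<integral>x. (u x)\<^sup>2 \<partial>M) - 2 * c * expectation u + c\<^sup>2"
proof -
  have "(\<integral>x. (u x - c)\<^sup>2 \<partial>M) = (\<integral>x. (u x)\<^sup>2 - 2 * c * u x + c\<^sup>2 \<partial>M)"
    by (intro Bochner_Integration.integral_cong) (auto simp: power2_eq_square algebra_simps)
  also have "\<dots> = (\<integral>x. (u x)\<^sup>2 \<partial>M) - 2 * c * expectation u + c\<^sup>2"
    using assms by (simp add: prob_space)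
  finally show ?thesis .
qed

lemma (in prob_space) nn_integral_square_diff_eq:
  fixes h :: "'a \<Rightarrow> real"
  assumes h: "integrable M h" and h2: "integrable M (\<lambda>y. (h y)\<^sup>2)"
  shows "(\<integral>\<^sup>+ y. \<integral>\<^sup>+ w. ennreal ((h y - h w)\<^sup>2) \<partial>M \<partial>M) = ennreal (2 * variance h)"
proof -
  define m where "m = expectation h"
  define Q where "Q = (\<integral>y. (h y)\<^sup>2 \<partial>M)"
  have var: "(\<integral>y. (h y - m)\<^sup>2 \<partial>M) = Q - m\<^sup>2"
    using integral_square_diff_const[OF h h2, of m] by (simp add: Q_def m_def power2_eq_square)
  have inner: "(\<integral>\<^sup>+ w. ennreal ((h y - h w)\<^sup>2) \<partial>M) = ennreal ((h y - m)\<^sup>2 + (Q - m\<^sup>2))" for y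
  proof -
    have "(\<integral>w. (h w - h y)\<^sup>2 \<partial>M) = (h y - m)\<^sup>2 + (Q - m\<^sup>2)"
      using integral_square_diff_const[OF h h2, of "h y"] by (simp add: Q_def m_def power2_eq_square algebra_simps)
    moreover have "integrable M (\<lambda>w. (h w - h y)\<^sup>2)"
      using h h2 by (auto simp: power2_diff)
    ultimately show ?thesis
      by (subst nn_integral_eq_integral) (simp_all add: power2_commute)
  qed
  have "(\<integral>\<^sup>+ y. \<integral>\<^sup>+ w. ennreal ((h y - h w)\<^sup>2) \<partial>M \<partial>M) = (\<integral>\<^sup>+ y. ennreal ((h y - m)\<^sup>2 + (Q - m\<^sup>2)) \<partial>M)"
    by (simp add: inner)
  also have "\<dots> = ennreal (\<integral>y. (h y - m)\<^sup>2 + (Q - m\<^sup>2) \<partial>M)"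
  proof (rule nn_integral_eq_integral)
    show "integrable M (\<lambda>y. (h y - m)\<^sup>2 + (Q - m\<^sup>2))" using h h2 by (auto simp: power2_diff)
    show "AE y in M. 0 \<le> (h y - m)\<^sup>2 + (Q - m\<^sup>2)"
      using var Bochner_Integration.integral_nonneg[of M "\<lambda>y. (h y - m)\<^sup>2"] by simp
  qed
  also have "(\<integral>y. (h y - m)\<^sup>2 + (Q - m\<^sup>2) \<partial>M) = (\<integral>y. (h y - m)\<^sup>2 \<partial>M) + (Q - m\<^sup>2)"
    using h h2 by (subst Bochner_Integration.integral_add) (auto simp: power2_diff prob_space)
  also have "\<dots> = 2 * (\<integral>y. (h y - m)\<^sup>2 \<partial>M)"
    by (simp add: var)
  finally show ?thesis by (simp add: m_def)
qed

lemma (in prob_space) integrable_square_diff_shift: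
  fixes F :: "'a \<Rightarrow> real"
  assumes "F \<in> borel_measurable M" and "integrable M (\<lambda>\<omega>. (F \<omega> - c)\<^sup>2)"
  shows "integrable M (\<lambda>\<omega>. (F \<omega> - a)\<^sup>2)"
proof (rule Bochner_Integration.integrable_bound[where f="\<lambda>\<omega>. 2 * (F \<omega> - c)\<^sup>2 + 2 * (c - a)\<^sup>2"])
  have "(F \<omega> - a)\<^sup>2 \<le> 2 * (F \<omega> - c)\<^sup>2 + 2 * (c - a)\<^sup>2" for \<omega>
    using zero_le_power2[of "(F \<omega> - c) - (c - a)"] by (simp add: power2_eq_square algebra_simps)
  then show "AE \<omega> in M. norm ((F \<omega> - a)\<^sup>2) \<le> norm (2 * (F \<omega> - c)\<^sup>2 + 2 * (c - a)\<^sup>2)"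
    by simp
qed (use assms in simp_all)

lemma (in prob_space) variance_le_nn_integral_square:
  fixes F :: "'a \<Rightarrow> real"
  assumes Fm: "F \<in> borel_measurable M"
  shows "variance F \<le> enn2real (\<integral>\<^sup>+\<omega>. ennreal ((F \<omega> - a)\<^sup>2) \<partial>M)"
proof (cases "integrable M (\<lambda>\<omega>. (F \<omega> - a)\<^sup>2)")
  case True
  define u where "u \<omega> = F \<omega> - a" for \<omega>
  have u2: "integrable M (\<lambda>\<omega>. (u \<omega>)\<^sup>2)" using True by (simp add: u_def)
  have u1: "integrable M u"
    by (rule square_integrable_imp_integrable[OF _ u2]) (use Fm in \<open>simp add: u_def\<close>)
  have "F = (\<lambda>\<omega>. u \<omega> + a)" by (simp add: u_def)
  then have "variance F = variance u" using u1 by (simp add: prob_space)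
  also have "\<dots> = expectation (\<lambda>\<omega>. (u \<omega>)\<^sup>2) - (expectation u)\<^sup>2" by (rule variance_eq[OF u1 u2])
  also have "\<dots> \<le> expectation (\<lambda>\<omega>. (u \<omega>)\<^sup>2)" by simp
  also have "\<dots> = enn2real (\<integral>\<^sup>+\<omega>. ennreal ((F \<omega> - a)\<^sup>2) \<partial>M)"
    by (subst integral_eq_nn_integral) (use Fm in \<open>auto simp: u_def\<close>)
  finally show ?thesis .
next
  case False
  then have "\<not> integrable M (\<lambda>\<omega>. (F \<omega> - expectation F)\<^sup>2)"
    using integrable_square_diff_shift[OF Fm] by blast
  then show ?thesis by (simp add: not_integrable_integral_eq)
qed

lemma (in finite_measure) integrable_if_truncations_bounded:
  fixes g :: "'a \<Rightarrow> real"
  assumes gm: "g \<in> borel_measurable M" and g0: "\<And>y. 0 \<le> g y"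
    and bound: "\<And>n. (\<integral>y. min (g y) (real n) \<partial>M) \<le> B"
  shows "integrable M g"
proof -
  have sup: "ennreal (g y) = (SUP n. ennreal (min (g y) (real n)))" for y
  proof (rule antisym)
    obtain n where "g y \<le> real n" using real_arch_simple by blast
    then show "ennreal (g y) \<le> (SUP n. ennreal (min (g y) (real n)))"
      by (metis SUP_upper UNIV_I min_absorb1)
  qed (auto intro!: SUP_least ennreal_leI)
  have "(\<integral>\<^sup>+y. ennreal (g y) \<partial>M) = (SUP n. \<integral>\<^sup>+y. ennreal (min (g y) (real n)) \<partial>M)"
    unfolding sup by (rule nn_integral_monotone_convergence_SUP)
      (use gm in \<open>auto simp: incseq_def le_fun_def intro!: ennreal_leI\<close>)
  also have "\<dots> \<le> ennreal B"
  proof (rule SUP_least)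
    fix n
    have "integrable M (\<lambda>y. min (g y) (real n))"
      by (rule integrable_const_bound[where B="real n"]) (use g0 gm in auto)
    then have "(\<integral>\<^sup>+y. ennreal (min (g y) (real n)) \<partial>M) = ennreal (\<integral>y. min (g y) (real n) \<partial>M)"
      by (rule nn_integral_eq_integral) (use g0 in simp)
    then show "(\<integral>\<^sup>+y. ennreal (min (g y) (real n)) \<partial>M) \<le> ennreal B"
      using bound[of n] by (simp add: ennreal_leI)
  qed
  finally have "(\<integral>\<^sup>+y. ennreal (g y) \<partial>M) < \<top>" by (rule le_less_trans) simp
  then show ?thesis using gm g0 by (intro integrableI_nonneg) auto
qed

section \<open>Markov kernels and the law of the chain\<close>

definition chain_step :: "('a::topological_space \<Rightarrow> 'a measure) \<Rightarrow> nat \<Rightarrow> (nat \<Rightarrow> 'a) \<Rightarrow> (nat \<Rightarrow> 'a) measure"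
  where "chain_step P n \<omega> = distr (P (\<omega> n)) (PiM {..Suc n} (\<lambda>_. borel)) (\<lambda>y. fun_upd \<omega> (Suc n) y)"

lemma chain_law_Suc_bind: "chain_law P x (Suc n) = chain_law P x n \<bind> chain_step P n"
  by (simp add: chain_step_def[abs_def])

locale markov_kernel =
  fixes P :: "'a::polish_space \<Rightarrow> 'a measure"
  assumes kernel: "P \<in> borel \<rightarrow>\<^sub>M prob_algebra borel"
begin

lemma prob_space_P: "prob_space (P z)" and sets_P[simp, measurable_cong]: "sets (P z) = sets borel"
  using measurable_space[OF kernel, of z] by (auto simp: space_prob_algebra)

lemma space_P[simp]: "space (P z) = UNIV"
  using sets_eq_imp_space_eq[OF sets_P] by simp

lemma measurable_P_subprob[measurable]: "P \<in> borel \<rightarrow>\<^sub>M subprob_algebra borel"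
  using measurable_prob_algebraD[OF kernel] .

lemma measurable_chain_step[measurable]:
  "chain_step P n \<in> PiM {..n} (\<lambda>_. borel) \<rightarrow>\<^sub>M subprob_algebra (PiM {..Suc n} (\<lambda>_. (borel::'a measure)))"
  unfolding chain_step_def[abs_def]
proof (rule measurable_distr2)
  show "(\<lambda>\<omega>. P (\<omega> n)) \<in> PiM {..n} (\<lambda>_. borel) \<rightarrow>\<^sub>M subprob_algebra borel"
    by (rule measurable_compose[OF _ measurable_P_subprob]) simp
  show "(\<lambda>(\<omega>, y). fun_upd \<omega> (Suc n) y) \<in> PiM {..n} (\<lambda>_. borel) \<Otimes>\<^sub>M borel \<rightarrow>\<^sub>M PiM {..Suc n} (\<lambda>_. borel)"
    using measurable_add_dim[of "Suc n" "{..n}" "\<lambda>_. borel"] by (simp add: atMost_Suc)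
qed

lemma prob_space_sets_chain_law:
  "prob_space (chain_law P x n) \<and> sets (chain_law P x n) = sets (PiM {..n} (\<lambda>_. borel))"
proof (induction n)
  case 0
  show ?case by (auto intro!: prob_space_return simp: space_PiM)
next
  case (Suc n)
  then interpret prob_space "chain_law P x n" by simp
  have K: "chain_step P n \<in> chain_law P x n \<rightarrow>\<^sub>M subprob_algebra (PiM {..Suc n} (\<lambda>_. (borel::'a measure)))"
    using measurable_chain_step measurable_cong_sets Suc by blast
  have "prob_space (chain_step P n \<omega>)" if "\<omega> \<in> space (chain_law P x n)" for \<omega>
    unfolding chain_step_def
    by (rule prob_space.prob_space_distr[OF prob_space_P], rule measurable_fun_upd[where J="{..n}"])
       (use that Suc sets_eq_imp_space_eq[of "chain_law P x n" "PiM {..n} (\<lambda>_. borel)"] in \<open>auto simp: atMost_Suc\<close>)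
  then show ?case unfolding chain_law_Suc_bind
    by (intro conjI prob_space_bind[OF _ K] sets_bind_measurable[OF K]) (auto simp: not_empty)
qed

lemma prob_space_chain_law: "prob_space (chain_law P x n)"
  using prob_space_sets_chain_law by blast

lemma sets_chain_law[measurable_cong]: "sets (chain_law P x n) = sets (PiM {..n} (\<lambda>_. borel))"
  using prob_space_sets_chain_law by blast

lemma space_chain_law: "space (chain_law P x n) = space (PiM {..n} (\<lambda>_. borel))"
  using sets_chain_law by (rule sets_eq_imp_space_eq)

lemma nn_integral_chain_law_Suc:
  assumes h: "h \<in> borel_measurable (PiM {..Suc n} (\<lambda>_. borel))"
  shows "(\<integral>\<^sup>+v. h v \<partial>chain_law P x (Suc n))
     = (\<integral>\<^sup>+\<omega>. \<integral>\<^sup>+y. h (fun_upd \<omega> (Suc n) y) \<partial>P (\<omega> n) \<partial>chain_law P x n)"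
proof -
  have K: "chain_step P n \<in> chain_law P x n \<rightarrow>\<^sub>M subprob_algebra (PiM {..Suc n} (\<lambda>_. borel))"
    using measurable_chain_step measurable_cong_sets[OF sets_chain_law refl] by blast
  have "(\<integral>\<^sup>+v. h v \<partial>chain_step P n \<omega>) = (\<integral>\<^sup>+y. h (fun_upd \<omega> (Suc n) y) \<partial>P (\<omega> n))"
    if \<omega>: "\<omega> \<in> space (PiM {..n} (\<lambda>_. borel))" for \<omega>
    unfolding chain_step_def
  proof (rule nn_integral_distr)
    have "(\<lambda>v. fun_upd \<omega> (Suc n) v) \<in> borel \<rightarrow>\<^sub>M PiM (insert (Suc n) {..n}) (\<lambda>_. borel)"
      by (rule measurable_component_update[OF \<omega>]) simp
    then show "(\<lambda>y. fun_upd \<omega> (Suc n) y) \<in> P (\<omega> n) \<rightarrow>\<^sub>M PiM {..Suc n} (\<lambda>_. borel)"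
      by (simp add: atMost_Suc cong: measurable_cong_sets)
  qed (use h in \<open>subst measurable_cong_sets[OF sets_distr refl]\<close>)
  then show ?thesis unfolding chain_law_Suc_bind nn_integral_bind[OF h K]
    by (intro nn_integral_cong) (simp add: space_chain_law)
qed

lemma integrable_square_lipschitz:
  fixes h :: "'a \<Rightarrow> real"
  assumes sigma: "sigma2 P z < \<infinity>" and h: "L-lipschitz_on UNIV h"
  shows "integrable (P z) (\<lambda>y. (h y)\<^sup>2)"
proof -
  interpret prob_space "P z" by (rule prob_space_P)
  have hm[measurable]: "h \<in> borel_measurable borel" using borel_measurable_lipschitz[OF h] .
  have "\<exists>y0. (\<integral>\<^sup>+ w. ennreal ((dist y0 w)\<^sup>2) \<partial>P z) \<noteq> \<top>"
  proof (rule ccontr)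
    assume "\<not> ?thesis"
    then have "(\<integral>\<^sup>+ y. \<integral>\<^sup>+ w. ennreal ((dist y w)\<^sup>2) \<partial>P z \<partial>P z) = \<top>"
      using emeasure_space_1 by (simp add: nn_integral_cong[of _ _ "\<lambda>_. \<top>"])
    then show False using sigma by (simp add: sigma2_def ennreal_mult_eq_top_iff)
  qed
  then obtain y0 where y0: "(\<integral>\<^sup>+ w. ennreal ((dist y0 w)\<^sup>2) \<partial>P z) \<noteq> \<top>" by blast
  have dist2: "integrable (P z) (\<lambda>w. (dist y0 w)\<^sup>2)"
    by (rule integrableI_nonneg) (use y0 in \<open>auto simp: top.not_eq_extremum\<close>)
  show ?thesis
  proof (rule Bochner_Integration.integrable_bound[where f="\<lambda>w. 2 * (h y0)\<^sup>2 + 2 * L\<^sup>2 * (dist y0 w)\<^sup>2"])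
    have "(h y)\<^sup>2 \<le> 2 * (h y0)\<^sup>2 + 2 * L\<^sup>2 * (dist y0 y)\<^sup>2" for y
    proof -
      have "\<bar>h y - h y0\<bar> \<le> L * dist y0 y"
        using lipschitz_on_UNIV_abs_diff_le[OF h, of y y0] by (simp add: dist_commute)
      then have "(h y - h y0)\<^sup>2 \<le> (L * dist y0 y)\<^sup>2"
        using abs_le_square_iff[of "h y - h y0" "L * dist y0 y"] lipschitz_on_nonneg[OF h] by simp
      moreover have "(h y)\<^sup>2 \<le> 2 * (h y0)\<^sup>2 + 2 * (h y - h y0)\<^sup>2"
        using zero_le_power2[of "h y0 - (h y - h y0)"] by (simp add: power2_eq_square algebra_simps)
      ultimately show ?thesis by (simp add: power_mult_distrib)
    qed
    then show "AE y in P z. norm ((h y)\<^sup>2) \<le> norm (2 * (h y0)\<^sup>2 + 2 * L\<^sup>2 * (dist y0 y)\<^sup>2)"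
      by simp
  qed (use dist2 in simp_all)
qed

end

section \<open>The Markov operator of a W1-contracting kernel\<close>

locale contracting_kernel = markov_kernel P for P :: "'a::polish_space \<Rightarrow> 'a measure" +
  fixes \<kappa> :: real
  assumes first_moment: "\<And>z. integrable (P z) (\<lambda>y. dist z y)"
    and kappa_pos: "0 < \<kappa>" and kappa_le_1: "\<kappa> \<le> 1"
    and contraction: "\<And>y z. W1 (P y) (P z) \<le> ereal ((1 - \<kappa>) * dist y z)"
begin

definition markov_op :: "('a \<Rightarrow> real) \<Rightarrow> 'a \<Rightarrow> real" where
  "markov_op g z = (\<integral>y. g y \<partial>P z)"

lemma one_minus_kappa_nonneg: "0 \<le> 1 - \<kappa>"
  using kappa_le_1 by simp

lemma integrable_lipschitz:
  fixes g :: "'a \<Rightarrow> real"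
  assumes "L-lipschitz_on UNIV g"
  shows "integrable (P z) g"
  using first_moment[of z] assms by (rule integrable_lipschitz_if_integrable_dist[OF prob_space_P sets_P])

text \<open>Integrating a Lipschitz function against a near-optimal coupling of \<open>P y\<close> and \<open>P z\<close>.\<close>

lemma markov_op_diff_le:
  fixes g :: "'a \<Rightarrow> real"
  assumes g: "L-lipschitz_on UNIV g"
  shows "\<bar>markov_op g y - markov_op g z\<bar> \<le> L * (1 - \<kappa>) * dist y z"
proof (rule field_le_epsilon)
  fix e :: real assume e: "0 < e"
  have L0: "0 \<le> L" using lipschitz_on_nonneg[OF g] .
  define \<epsilon> where "\<epsilon> = e / (L + 1)"
  have eps: "0 < \<epsilon>" using e L0 by (simp add: \<epsilon>_def)
  have "W1 (P y) (P z) < ereal ((1 - \<kappa>) * dist y z + \<epsilon>)"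
    by (rule le_less_trans[OF contraction]) (use eps in simp)
  then obtain \<gamma> where "\<gamma> \<in> couplings (P y) (P z)"
    and lt: "enn2ereal (\<integral>\<^sup>+ p. ennreal (dist (fst p) (snd p)) \<partial>\<gamma>) < ereal ((1 - \<kappa>) * dist y z + \<epsilon>)"
    unfolding W1_def INF_less_iff by blast
  then have sg: "sets \<gamma> = sets (borel \<Otimes>\<^sub>M borel)"
    and m1: "distr \<gamma> borel fst = P y" and m2: "distr \<gamma> borel snd = P z"
    by (auto simp: couplings_def)
  have fstm: "fst \<in> \<gamma> \<rightarrow>\<^sub>M borel" and sndm: "snd \<in> \<gamma> \<rightarrow>\<^sub>M borel"
    by (subst measurable_cong_sets[OF sg refl], simp)+
  have gm: "g \<in> borel_measurable borel" using borel_measurable_lipschitz[OF g] .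
  have i1: "integrable \<gamma> (\<lambda>p. g (fst p))"
    using integrable_distr_eq[OF fstm gm] integrable_lipschitz[OF g, of y] m1 by simp
  have i2: "integrable \<gamma> (\<lambda>p. g (snd p))"
    using integrable_distr_eq[OF sndm gm] integrable_lipschitz[OF g, of z] m2 by simp
  have "markov_op g y - markov_op g z = (\<integral>p. g (fst p) - g (snd p) \<partial>\<gamma>)"
    unfolding markov_op_def using integral_distr[OF fstm gm] integral_distr[OF sndm gm] m1 m2 i1 i2
    by simp
  then have "\<bar>markov_op g y - markov_op g z\<bar> \<le> (\<integral>\<^sup>+p. norm (g (fst p) - g (snd p)) \<partial>\<gamma>)"
    using integral_norm_bound_ennreal[OF Bochner_Integration.integrable_diff[OF i1 i2]] by simp
  also have "\<dots> \<le> (\<integral>\<^sup>+p. ennreal L * ennreal (dist (fst p) (snd p)) \<partial>\<gamma>)"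
    by (rule nn_integral_mono) (use lipschitz_on_UNIV_abs_diff_le[OF g] L0 in \<open>simp add: ennreal_mult[symmetric]\<close>)
  also have "\<dots> = ennreal L * (\<integral>\<^sup>+p. ennreal (dist (fst p) (snd p)) \<partial>\<gamma>)"
    by (rule nn_integral_cmult) (use fstm sndm in measurable)
  also have "\<dots> \<le> ennreal L * ennreal ((1 - \<kappa>) * dist y z + \<epsilon>)"
  proof -
    have "0 \<le> (1 - \<kappa>) * dist y z + \<epsilon>" using one_minus_kappa_nonneg eps by simp
    then have "(\<integral>\<^sup>+p. ennreal (dist (fst p) (snd p)) \<partial>\<gamma>) \<le> ennreal ((1 - \<kappa>) * dist y z + \<epsilon>)"
      using lt by (metis enn2ereal_ennreal less_eq_ennreal.rep_eq order.strict_implies_order)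
    then show ?thesis by (rule mult_left_mono) simp
  qed
  also have "\<dots> = ennreal (L * ((1 - \<kappa>) * dist y z + \<epsilon>))"
    using L0 eps one_minus_kappa_nonneg by (simp add: ennreal_mult)
  finally have "\<bar>markov_op g y - markov_op g z\<bar> \<le> L * ((1 - \<kappa>) * dist y z + \<epsilon>)"
    using L0 eps one_minus_kappa_nonneg
    by (simp add: ennreal_le_iff2) (auto intro!: mult_nonneg_nonneg)
  also have "\<dots> \<le> L * (1 - \<kappa>) * dist y z + e"
    using L0 e by (simp add: \<epsilon>_def field_simps)
  finally show "\<bar>markov_op g y - markov_op g z\<bar> \<le> L * (1 - \<kappa>) * dist y z + e" .
qed

lemma markov_op_lipschitz:
  "L-lipschitz_on UNIV g \<Longrightarrow> (L * (1 - \<kappa>))-lipschitz_on UNIV (markov_op g)"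
  using markov_op_diff_le lipschitz_on_nonneg one_minus_kappa_nonneg
  by (auto simp: lipschitz_on_def dist_real_def)

lemma markov_op_mono:
  assumes "L-lipschitz_on UNIV g" "L'-lipschitz_on UNIV g'" "\<And>y. g y \<le> g' y"
  shows "markov_op g z \<le> markov_op g' z"
  unfolding markov_op_def
  by (rule integral_mono[OF integrable_lipschitz[OF assms(1)] integrable_lipschitz[OF assms(2)] assms(3)])

lemma markov_op_affine:
  assumes "L-lipschitz_on UNIV g"
  shows "markov_op (\<lambda>y. c + r * g y) = (\<lambda>y. c + r * markov_op g y)"
proof
  fix z
  interpret prob_space "P z" by (rule prob_space_P)
  show "markov_op (\<lambda>y. c + r * g y) z = c + r * markov_op g z"
    unfolding markov_op_def using integrable_lipschitz[OF assms, of z] prob_space by simp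
qed

lemma markov_op_const: "markov_op (\<lambda>_. c) = (\<lambda>_. c)"
  using markov_op_affine[OF lipschitz_on_constant, of c 0] by simp

lemma markov_op_pow_lipschitz:
  "L-lipschitz_on UNIV g \<Longrightarrow> (L * (1 - \<kappa>) ^ k)-lipschitz_on UNIV ((markov_op ^^ k) g)"
  by (induction k) (auto dest: markov_op_lipschitz simp: ac_simps)

lemma markov_op_pow_mono:
  assumes "L-lipschitz_on UNIV g" "L'-lipschitz_on UNIV g'" "\<And>y. g y \<le> g' y"
  shows "(markov_op ^^ k) g z \<le> (markov_op ^^ k) g' z"
  using assms(3)
  by (induction k arbitrary: z)
     (auto intro!: markov_op_mono[OF markov_op_pow_lipschitz[OF assms(1)] markov_op_pow_lipschitz[OF assms(2)]])

lemma markov_op_pow_affine: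
  assumes "L-lipschitz_on UNIV g"
  shows "(markov_op ^^ k) (\<lambda>y. c + r * g y) = (\<lambda>y. c + r * (markov_op ^^ k) g y)"
  by (induction k) (simp_all add: markov_op_affine[OF markov_op_pow_lipschitz[OF assms]])

lemma markov_op_pow_const: "(markov_op ^^ k) (\<lambda>_. c) = (\<lambda>_. c)"
  by (induction k) (simp_all add: markov_op_const)

lemma markov_op_pow_bounds:
  assumes "L-lipschitz_on UNIV g" "\<And>y. a \<le> g y" "\<And>y. g y \<le> b"
  shows "a \<le> (markov_op ^^ k) g z \<and> (markov_op ^^ k) g z \<le> b"
  using markov_op_pow_mono[OF lipschitz_on_constant assms(1), of a] 
    markov_op_pow_mono[OF assms(1) lipschitz_on_constant, of b] assms(2,3)
  by (simp add: markov_op_pow_const)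

lemma markov_op_nonneg:
  assumes "L-lipschitz_on UNIV g" "\<And>y. 0 \<le> g y"
  shows "0 \<le> markov_op g z"
  using markov_op_mono[OF lipschitz_on_constant assms] by (simp add: markov_op_const)

lemma markov_op_pow_nonneg:
  assumes "L-lipschitz_on UNIV g" "\<And>y. 0 \<le> g y"
  shows "0 \<le> (markov_op ^^ k) g z"
  using markov_op_pow_mono[OF lipschitz_on_constant assms] by (simp add: markov_op_pow_const)

text \<open>The iterates of \<open>d(x,\<cdot>)\<close> stay bounded at \<open>x\<close>, since \<open>P d(x,\<cdot>) \<le> P d(x,\<cdot>)(x) + (1 - \<kappa>) d(x,\<cdot>)\<close>.\<close>

lemma markov_op_pow_dist_le: "(markov_op ^^ k) (dist x) x \<le> markov_op (dist x) x / \<kappa>"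
proof (induction k)
  case 0
  show ?case using markov_op_nonneg[OF lipschitz_on_dist_left zero_le_dist, of x x] kappa_pos by simp
next
  case (Suc k)
  define a where "a = markov_op (dist x) x"
  have step: "markov_op (dist x) y \<le> a + (1 - \<kappa>) * dist x y" for y
    using markov_op_diff_le[OF lipschitz_on_dist_left[of x], of y x] dist_commute[of y x]
    by (simp add: a_def abs_le_iff)
  have "(markov_op ^^ Suc k) (dist x) x = (markov_op ^^ k) (markov_op (dist x)) x"
    by (simp add: funpow_Suc_right del: funpow.simps)
  also have "\<dots> \<le> (markov_op ^^ k) (\<lambda>y. a + (1 - \<kappa>) * dist x y) x"
    by (rule markov_op_pow_mono[OF markov_op_lipschitz[OF lipschitz_on_dist_left]
          lipschitz_on_add[OF lipschitz_on_constant lipschitz_on_cmult_real[OF lipschitz_on_dist_left]] step])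
  also have "\<dots> = a + (1 - \<kappa>) * (markov_op ^^ k) (dist x) x"
    by (simp add: markov_op_pow_affine[OF lipschitz_on_dist_left])
  also have "\<dots> \<le> a + (1 - \<kappa>) * (a / \<kappa>)"
    using mult_left_mono[OF Suc one_minus_kappa_nonneg] by (simp add: a_def)
  also have "\<dots> = a / \<kappa>" using kappa_pos by (simp add: field_simps)
  finally show ?case by (simp add: a_def)
qed

lemma markov_op_pow_min_dist_le:
  assumes "0 \<le> M"
  shows "(markov_op ^^ k) (\<lambda>y. min (dist x y) M) y \<le> min M (markov_op (dist x) x / \<kappa> + (1 - \<kappa>) ^ k * dist x y)"
proof -
  have D: "1-lipschitz_on UNIV (\<lambda>y. min (dist x y) M)"
    by (rule lipschitz_on_min_const[OF lipschitz_on_dist_left])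
  have "\<bar>(markov_op ^^ k) (\<lambda>y. min (dist x y) M) y - (markov_op ^^ k) (\<lambda>y. min (dist x y) M) x\<bar>
      \<le> 1 * (1 - \<kappa>) ^ k * dist y x"
    by (rule lipschitz_on_UNIV_abs_diff_le[OF markov_op_pow_lipschitz[OF D]])
  moreover have "(markov_op ^^ k) (\<lambda>y. min (dist x y) M) x \<le> (markov_op ^^ k) (dist x) x"
    by (rule markov_op_pow_mono[OF D lipschitz_on_dist_left]) simp
  moreover have "(markov_op ^^ k) (\<lambda>y. min (dist x y) M) y \<le> M"
    using markov_op_pow_bounds[OF D, of 0 M] assms by simp
  ultimately show ?thesis
    using markov_op_pow_dist_le[of k x] dist_commute[of y x] by (simp add: abs_le_iff)
qed

lemma lipschitz_absorb_markov_op: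
  assumes f: "\<And>k. (L k)-lipschitz_on UNIV (f k)"
  shows "((L(n := L n + L (Suc n) * (1 - \<kappa>))) k)-lipschitz_on UNIV
           ((f(n := \<lambda>z. f n z + markov_op (f (Suc n)) z)) k)"
  using lipschitz_on_add[OF f markov_op_lipschitz[OF f]] f by simp

definition tail_weight :: "(nat \<Rightarrow> real) \<Rightarrow> nat \<Rightarrow> nat \<Rightarrow> real" where
  "tail_weight L n k = (\<Sum>j\<in>{k..n}. (1 - \<kappa>) ^ (j - k) * L j)"

lemma tail_weight_Suc:
  assumes "k \<le> n"
  shows "tail_weight L (Suc n) k = tail_weight (L(n := L n + L (Suc n) * (1 - \<kappa>))) n k"
proof -
  have "tail_weight (L(n := L n + L (Suc n) * (1 - \<kappa>))) n k
      = (\<Sum>j\<in>{k..n}. (1 - \<kappa>) ^ (j - k) * L j + (if j = n then (1 - \<kappa>) ^ (j - k) * (L (Suc n) * (1 - \<kappa>)) else 0))"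
    unfolding tail_weight_def by (intro sum.cong) (auto simp: algebra_simps)
  also have "\<dots> = tail_weight L (Suc n) k"
    using assms by (simp add: sum.distrib tail_weight_def Suc_diff_le algebra_simps)
  finally show ?thesis by simp
qed

lemma tail_weight_last: "tail_weight L n n = L n"
  by (simp add: tail_weight_def)

lemma tail_weight_rec:
  assumes "k < n" shows "tail_weight L n k = L k + (1 - \<kappa>) * tail_weight L n (Suc k)"
proof -
  have "(\<Sum>j\<in>{Suc k..n}. (1 - \<kappa>) ^ (j - k) * L j) = (1 - \<kappa>) * tail_weight L n (Suc k)"
    unfolding tail_weight_def sum_distrib_left
  proof (intro sum.cong refl)
    fix j assume "j \<in> {Suc k..n}"
    then have "j - k = Suc (j - Suc k)" by auto
    then show "(1 - \<kappa>) ^ (j - k) * L j = (1 - \<kappa>) * ((1 - \<kappa>) ^ (j - Suc k) * L j)" by simp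
  qed
  then show ?thesis
    unfolding tail_weight_def using assms by (simp add: sum.atLeast_Suc_atMost)
qed

lemma tail_weight_nonneg: "(\<And>j. 0 \<le> L j) \<Longrightarrow> 0 \<le> tail_weight L n k"
  unfolding tail_weight_def using one_minus_kappa_nonneg by (intro sum_nonneg mult_nonneg_nonneg) auto

lemma tail_weight_average_le:
  fixes T T0 :: nat and l :: real
  assumes T: "1 \<le> T" and l: "0 \<le> l" and k: "k \<le> T0 + T"
  shows "tail_weight (\<lambda>j. if T0 + 1 \<le> j then l / real T else 0) (T0 + T) k
           \<le> l / (real T * \<kappa>) * (1 - \<kappa>) ^ (T0 + 1 - k)"
  using k
proof (induction k rule: inc_induct)
  case base
  have "l / real T \<le> l / (real T * \<kappa>)"
    using T l kappa_pos kappa_le_1 by (simp add: divide_left_mono mult_le_cancel_left1)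
  then show ?case using T by (simp add: tail_weight_last)
next
  case (step n)
  then have "tail_weight (\<lambda>j. if T0 + 1 \<le> j then l / real T else 0) (T0 + T) n
      \<le> (if T0 + 1 \<le> n then l / real T else 0) + (1 - \<kappa>) * (l / (real T * \<kappa>) * (1 - \<kappa>) ^ (T0 + 1 - Suc n))"
    using mult_left_mono[OF step(3) one_minus_kappa_nonneg] by (simp add: tail_weight_rec)
  also have "\<dots> = l / (real T * \<kappa>) * (1 - \<kappa>) ^ (T0 + 1 - n)"
  proof (cases "T0 + 1 \<le> n")
    case True
    then show ?thesis using T kappa_pos by (simp add: field_simps)
  next
    case False
    then have "T0 + 1 - n = Suc (T0 + 1 - Suc n)" by simp
    then show ?thesis using False by simp
  qed
  finally show ?case .
qed

lemma weighted_geometric_sum_le: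
  fixes T T0 :: nat and E C D :: real
  assumes E: "0 \<le> E" and C: "0 \<le> C" and D: "0 \<le> D"
  shows "(\<Sum>k\<in>{1..T0 + T}. ((1 - \<kappa>) ^ (T0 + 1 - k))\<^sup>2 * (E + C * (1 - \<kappa>) ^ (k - 1) * D))
    \<le> (if T0 = 0 then real T * E + C * D / \<kappa>
       else (real T + 1 / \<kappa>) * E + 2 * C * (1 - \<kappa>) ^ T0 * D / \<kappa>)"
proof -
  define \<rho> where "\<rho> = 1 - \<kappa>"
  have \<rho>: "0 \<le> \<rho>" "\<rho> < 1" using kappa_pos kappa_le_1 by (auto simp: \<rho>_def)
  define t where "t k = (\<rho> ^ (T0 + 1 - k))\<^sup>2 * (E + C * \<rho> ^ (k - 1) * D)" for k
  have split: "(\<Sum>k\<in>{1..T0 + T}. t k) = (\<Sum>k\<in>{1..T0}. t k) + (\<Sum>k\<in>{T0 + 1..T0 + T}. t k)"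
    by (subst sum.union_disjoint[symmetric]) (auto intro: sum.cong)
  have late: "(\<Sum>k\<in>{T0 + 1..T0 + T}. t k) \<le> real T * E + C * D * \<rho> ^ T0 / \<kappa>"
    using sum_weighted_powers_late_le[OF \<rho> C D, where a=T0 and m=T and E=E] by (simp add: t_def \<rho>_def)
  show ?thesis
  proof (cases "T0 = 0")
    case True
    then show ?thesis using split late by (simp add: t_def \<rho>_def)
  next
    case False
    have "(\<Sum>k\<in>{1..T0}. t k) \<le> (E + C * D * \<rho> ^ T0) / \<kappa>"
      using sum_weighted_powers_early_le[OF \<rho> E C D, where m=T0] by (simp add: t_def \<rho>_def)
    moreover have "(E + C * D * \<rho> ^ T0) / \<kappa> + (real T * E + C * D * \<rho> ^ T0 / \<kappa>)
        = (real T + 1 / \<kappa>) * E + 2 * C * \<rho> ^ T0 * D / \<kappa>"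
      using kappa_pos by (simp add: field_simps)
    ultimately have "(\<Sum>k\<in>{1..T0 + T}. t k) \<le> (real T + 1 / \<kappa>) * E + 2 * C * \<rho> ^ T0 * D / \<kappa>"
      using split late by linarith
    then show ?thesis using False by (simp add: t_def \<rho>_def)
  qed
qed

end

section \<open>The invariant measure\<close>

locale stationary_kernel = contracting_kernel P \<kappa> for P :: "'a::polish_space \<Rightarrow> 'a measure" and \<kappa> +
  fixes \<pi> :: "'a measure"
  assumes pi_prob: "prob_space \<pi>" and pi_sets[measurable_cong]: "sets \<pi> = sets borel"
    and pi_inv: "\<pi> \<bind> P = \<pi>"
begin

lemma space_pi[simp]: "space \<pi> = UNIV"
  using sets_eq_imp_space_eq[OF pi_sets] by simp

lemma borel_measurable_lipschitz_pi:
  fixes g :: "'a \<Rightarrow> real"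
  assumes "L-lipschitz_on UNIV g" shows "g \<in> borel_measurable \<pi>"
  unfolding measurable_cong_sets[OF pi_sets refl] by (rule borel_measurable_lipschitz[OF assms])

lemma integral_markov_op:
  assumes g: "L-lipschitz_on UNIV g" and g0: "\<And>y. 0 \<le> g y"
  shows "(\<integral>y. markov_op g y \<partial>\<pi>) = (\<integral>y. g y \<partial>\<pi>)"
proof -
  have Pg0: "0 \<le> markov_op g y" for y by (rule markov_op_nonneg[OF g g0])
  have P_pi: "P \<in> \<pi> \<rightarrow>\<^sub>M subprob_algebra borel"
    using measurable_P_subprob measurable_cong_sets[OF pi_sets refl] by blast
  have "(\<integral>\<^sup>+y. ennreal (g y) \<partial>(\<pi> \<bind> P)) = (\<integral>\<^sup>+y. \<integral>\<^sup>+w. ennreal (g w) \<partial>P y \<partial>\<pi>)"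
    by (rule nn_integral_bind[OF _ P_pi]) (use borel_measurable_lipschitz[OF g] in simp)
  then have "(\<integral>\<^sup>+y. ennreal (g y) \<partial>\<pi>) = (\<integral>\<^sup>+y. \<integral>\<^sup>+w. ennreal (g w) \<partial>P y \<partial>\<pi>)"
    by (simp only: pi_inv)
  also have "\<dots> = (\<integral>\<^sup>+y. ennreal (markov_op g y) \<partial>\<pi>)"
    unfolding markov_op_def
    by (intro nn_integral_cong nn_integral_eq_integral) (use integrable_lipschitz[OF g] g0 in auto)
  finally show ?thesis
    using integral_eq_nn_integral[OF borel_measurable_lipschitz_pi[OF g]]
      integral_eq_nn_integral[OF borel_measurable_lipschitz_pi[OF markov_op_lipschitz[OF g]]] Pg0 g0
    by simp
qed

lemma integral_markov_op_pow:
  assumes g: "L-lipschitz_on UNIV g" and g0: "\<And>y. 0 \<le> g y"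
  shows "(\<integral>y. (markov_op ^^ k) g y \<partial>\<pi>) = (\<integral>y. g y \<partial>\<pi>)"
proof (induction k)
  case (Suc k)
  then show ?case
    using integral_markov_op[OF markov_op_pow_lipschitz[OF g] markov_op_pow_nonneg[OF g g0]] by simp
qed simp

text \<open>Integrate the bound of \<open>markov_op_pow_min_dist_le\<close> against \<open>\<pi>\<close> and let \<open>k \<rightarrow> \<infinity>\<close>;
  invariance of \<open>\<pi>\<close> keeps the left-hand side fixed.\<close>

lemma integral_min_dist_le:
  assumes M0: "0 \<le> M"
  shows "(\<integral>y. min (dist x y) M \<partial>\<pi>) \<le> markov_op (dist x) x / \<kappa>"
proof -
  interpret pi: prob_space \<pi> by (rule pi_prob)
  define a where "a = markov_op (dist x) x"
  have a0: "0 \<le> a" unfolding a_def by (rule markov_op_nonneg[OF lipschitz_on_dist_left zero_le_dist])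
  define D where "D y = min (dist x y) M" for y
  have Dl: "1-lipschitz_on UNIV D" unfolding D_def by (rule lipschitz_on_min_const[OF lipschitz_on_dist_left])
  have D: "0 \<le> D y" "D y \<le> M" for y using M0 by (auto simp: D_def)
  define s where "s k y = min M (a / \<kappa> + (1 - \<kappa>) ^ k * dist x y)" for k y
  have s0: "0 \<le> s k y" "s k y \<le> M" for k y
    using M0 a0 kappa_pos one_minus_kappa_nonneg by (auto simp: s_def)
  have sm: "s k \<in> borel_measurable \<pi>" for k unfolding s_def by measurable
  have le: "(\<integral>y. D y \<partial>\<pi>) \<le> (\<integral>y. s k y \<partial>\<pi>)" for k
  proof -
    have "(\<integral>y. D y \<partial>\<pi>) = (\<integral>y. (markov_op ^^ k) D y \<partial>\<pi>)"
      using integral_markov_op_pow[OF Dl D(1)] by simp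
    also have "\<dots> \<le> (\<integral>y. s k y \<partial>\<pi>)"
    proof (rule integral_mono)
      show "integrable \<pi> ((markov_op ^^ k) D)"
        by (rule pi.integrable_const_bound[where B=M])
           (use markov_op_pow_bounds[OF Dl D(1,2)] borel_measurable_lipschitz_pi[OF markov_op_pow_lipschitz[OF Dl]] in auto)
      show "integrable \<pi> (s k)"
        by (rule pi.integrable_const_bound[where B=M]) (use s0 sm in auto)
      show "(markov_op ^^ k) D y \<le> s k y" for y
        using markov_op_pow_min_dist_le[OF M0] by (simp add: D_def[abs_def] s_def a_def)
    qed
    finally show ?thesis .
  qed
  have "(\<lambda>k. \<integral>y. s k y \<partial>\<pi>) \<longlonglongrightarrow> (\<integral>y. min M (a / \<kappa>) \<partial>\<pi>)"
  proof (rule integral_dominated_convergence[where w="\<lambda>_. M"])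
    have r: "(\<lambda>k. (1 - \<kappa>) ^ k) \<longlonglongrightarrow> 0"
      by (rule LIMSEQ_power_zero) (use one_minus_kappa_nonneg kappa_pos in simp)
    have "(\<lambda>k. s k y) \<longlonglongrightarrow> min M (a / \<kappa> + 0 * dist x y)" for y
      unfolding s_def by (intro tendsto_intros r)
    then show "AE y in \<pi>. (\<lambda>k. s k y) \<longlonglongrightarrow> min M (a / \<kappa>)" by simp
  qed (use s0 sm in simp_all)
  then have "(\<integral>y. D y \<partial>\<pi>) \<le> (\<integral>y. min M (a / \<kappa>) \<partial>\<pi>)"
    by (rule LIMSEQ_le_const) (use le in auto)
  also have "\<dots> \<le> a / \<kappa>" using pi.prob_space by simp
  finally show ?thesis by (simp add: D_def a_def)
qed

lemma integrable_dist_pi: "integrable \<pi> (\<lambda>y. dist x y)"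
proof -
  interpret pi: prob_space \<pi> by (rule pi_prob)
  show ?thesis
  proof (rule pi.integrable_if_truncations_bounded)
    show "(\<integral>y. min (dist x y) (real n) \<partial>\<pi>) \<le> markov_op (dist x) x / \<kappa>" for n
      by (rule integral_min_dist_le) simp
  qed simp_all
qed

lemma integrable_lipschitz_pi:
  fixes g :: "'a \<Rightarrow> real"
  assumes "L-lipschitz_on UNIV g" shows "integrable \<pi> g"
  by (rule integrable_lipschitz_if_integrable_dist[OF pi_prob pi_sets integrable_dist_pi assms])

lemma lipschitz_le_integral_plus_eccentricity:
  assumes g: "L-lipschitz_on UNIV g"
  shows "g x \<le> (\<integral>y. g y \<partial>\<pi>) + L * eccentricity \<pi> x"
proof -
  interpret pi: prob_space \<pi> by (rule pi_prob)
  have "g x - g y \<le> L * dist x y" for y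
    using lipschitz_on_UNIV_abs_diff_le[OF g, of x y] by simp
  then have "(\<integral>y. g x - g y \<partial>\<pi>) \<le> (\<integral>y. L * dist x y \<partial>\<pi>)"
    using integrable_lipschitz_pi[OF g] integrable_dist_pi[of x] by (intro integral_mono) auto
  then show ?thesis using integrable_lipschitz_pi[OF g] integrable_dist_pi[of x] pi.prob_space
    by (simp add: eccentricity_def)
qed

lemma nn_integral_chain_law_le:
  assumes "L-lipschitz_on UNIV g" "\<And>y. 0 \<le> g y"
  shows "(\<integral>\<^sup>+\<omega>. ennreal (g (\<omega> k)) \<partial>chain_law P x k)
           \<le> ennreal ((\<integral>y. g y \<partial>\<pi>) + L * (1 - \<kappa>) ^ k * eccentricity \<pi> x)"
  using assms
proof (induction k arbitrary: g L)
  case 0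
  have "(\<lambda>\<omega>. ennreal (g (\<omega> 0))) \<in> borel_measurable (PiM {0::nat} (\<lambda>_. borel))"
    using borel_measurable_lipschitz[OF 0(1)] by measurable
  then have "(\<integral>\<^sup>+\<omega>. ennreal (g (\<omega> 0)) \<partial>chain_law P x 0) = ennreal (g x)"
    by (subst chain_law.simps, subst nn_integral_return) (auto simp: space_PiM)
  then show ?case using lipschitz_le_integral_plus_eccentricity[OF 0(1)] by (simp add: ennreal_leI)
next
  case (Suc k)
  have "(\<lambda>\<omega>. ennreal (g (\<omega> (Suc k)))) \<in> borel_measurable (PiM {..Suc k} (\<lambda>_. borel))"
    using borel_measurable_lipschitz[OF Suc(2)] by measurable
  then have "(\<integral>\<^sup>+\<omega>. ennreal (g (\<omega> (Suc k))) \<partial>chain_law P x (Suc k))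
      = (\<integral>\<^sup>+\<omega>. \<integral>\<^sup>+y. ennreal (g y) \<partial>P (\<omega> k) \<partial>chain_law P x k)"
    by (simp add: nn_integral_chain_law_Suc del: chain_law.simps)
  also have "\<dots> = (\<integral>\<^sup>+\<omega>. ennreal (markov_op g (\<omega> k)) \<partial>chain_law P x k)"
    unfolding markov_op_def
    by (intro nn_integral_cong nn_integral_eq_integral) (use integrable_lipschitz[OF Suc(2)] Suc(3) in auto)
  also have "\<dots> \<le> ennreal ((\<integral>y. markov_op g y \<partial>\<pi>) + (L * (1 - \<kappa>)) * (1 - \<kappa>) ^ k * eccentricity \<pi> x)"
    by (rule Suc.IH[OF markov_op_lipschitz[OF Suc(2)] markov_op_nonneg[OF Suc(2,3)]])
  also have "\<dots> = ennreal ((\<integral>y. g y \<partial>\<pi>) + L * (1 - \<kappa>) ^ Suc k * eccentricity \<pi> x)"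
    using integral_markov_op[OF Suc(2,3)] by (simp add: ac_simps)
  finally show ?case .
qed

end

section \<open>Variance of ergodic averages\<close>

locale diffusion_bound = contracting_kernel P \<kappa> for P :: "'a::polish_space \<Rightarrow> 'a measure" and \<kappa> +
  fixes C :: real and S :: "'a \<Rightarrow> real"
  assumes S_lip: "C-lipschitz_on UNIV S"
    and S_bound: "\<And>z. sigma2 P z < \<infinity> \<and>
                       enn2ereal (sigma2 P z / (n_loc P z * ennreal \<kappa>)) \<le> ereal (S z)"
begin

lemma S_nonneg: "0 \<le> S z"
  using S_bound[of z] by (metis enn2ereal_nonneg ereal_less_eq(5) order_trans)

lemma sigma2_finite: "sigma2 P z < \<infinity>"
  using S_bound by blast

text \<open>This is where the local dimension \<open>n\<^sub>z\<close> enters: by its definition as an infimum over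
  1-Lipschitz functions, the double integral of \<open>(g y - g w)\<^sup>2\<close> is at most \<open>2 \<sigma>(z)\<^sup>2 / n\<^sub>z\<close>.\<close>

lemma double_integral_square_diff_le:
  assumes g: "1-lipschitz_on UNIV g"
  shows "(\<integral>\<^sup>+y. \<integral>\<^sup>+w. ennreal ((g y - g w)\<^sup>2) \<partial>P z \<partial>P z) \<le> ennreal (2 * \<kappa> * S z)"
proof -
  define A where "A = (\<integral>\<^sup>+ y. \<integral>\<^sup>+ w. ennreal ((dist y w)\<^sup>2) \<partial>P z \<partial>P z)"
  define B where "B = (\<integral>\<^sup>+ y. \<integral>\<^sup>+ w. ennreal ((g y - g w)\<^sup>2) \<partial>P z \<partial>P z)"
  have "(g y - g w)\<^sup>2 \<le> (dist y w)\<^sup>2" for y w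
    using lipschitz_on_UNIV_abs_diff_le[OF g, of y w] abs_le_square_iff[of "g y - g w" "dist y w"] by simp
  then have "B \<le> A"
    unfolding A_def B_def by (intro nn_integral_mono) simp
  have sigma: "sigma2 P z = (1/2) * A" by (simp add: sigma2_def A_def)
  then have "A \<noteq> \<top>" using S_bound[of z] by (auto simp: ennreal_mult_eq_top_iff)
  have n_le: "n_loc P z \<le> A / B"
    unfolding n_loc_def A_def B_def by (rule INF_lower) (use g in simp)
  show ?thesis
  proof (cases "B = 0")
    case False
    obtain a b where A: "A = ennreal a" and B: "B = ennreal b" and "0 < b" "b \<le> a"
      using \<open>B \<le> A\<close> \<open>A \<noteq> \<top>\<close> False
      by (cases A; cases B) (auto simp: top_unique)
    then have "n_loc P z \<le> ennreal (a / b)" using n_le by (simp add: divide_ennreal)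
    then obtain \<nu> where \<nu>: "n_loc P z = ennreal \<nu>" "0 \<le> \<nu>" "\<nu> \<le> a / b"
      using \<open>0 < b\<close> \<open>b \<le> a\<close> by (cases "n_loc P z") (auto simp: top_unique ennreal_le_iff)
    have half: "(1 / 2 :: ennreal) = ennreal (1 / 2)" using divide_ennreal[of 1 2] by simp
    have "sigma2 P z = ennreal (a / 2)"
      unfolding sigma A half using \<open>0 < b\<close> \<open>b \<le> a\<close> by (subst ennreal_mult[symmetric]) auto
    moreover have "n_loc P z * ennreal \<kappa> = ennreal (\<nu> * \<kappa>)"
      unfolding \<nu>(1) using \<nu>(2) kappa_pos by (simp add: ennreal_mult)
    ultimately have S: "enn2ereal (ennreal (a / 2) / ennreal (\<nu> * \<kappa>)) \<le> ereal (S z)"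
      using S_bound[of z] by simp
    have "0 < \<nu>"
    proof (rule ccontr)
      assume "\<not> 0 < \<nu>"
      then show False using S \<nu>(2) \<open>0 < b\<close> \<open>b \<le> a\<close> by simp
    qed
    then have "a / (2 * (\<nu> * \<kappa>)) \<le> S z"
      using S kappa_pos \<open>0 < b\<close> \<open>b \<le> a\<close> by (simp add: divide_ennreal)
    then have "a \<le> \<nu> * (2 * \<kappa> * S z)"
      using \<open>0 < \<nu>\<close> kappa_pos by (simp add: field_simps)
    moreover have "\<nu> * b \<le> a" using \<nu>(3) \<open>0 < b\<close> by (simp add: field_simps)
    ultimately have "\<nu> * b \<le> \<nu> * (2 * \<kappa> * S z)" by linarith
    then have "b \<le> 2 * \<kappa> * S z" using \<open>0 < \<nu>\<close> by simp
    then show ?thesis unfolding B_def[symmetric] B by (simp add: ennreal_leI)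
  qed (simp add: B_def)
qed

lemma variance_markov_op_le:
  assumes h: "L-lipschitz_on UNIV h"
  shows "(\<integral>y. (h y - markov_op h z)\<^sup>2 \<partial>P z) \<le> \<kappa> * L\<^sup>2 * S z"
proof (cases "L = 0")
  case True
  then have "h y = h z" for y using lipschitz_on_UNIV_abs_diff_le[OF h, of y z] by simp
  then obtain c where "h = (\<lambda>_. c)" by auto
  then show ?thesis using kappa_pos S_nonneg[of z] by (simp add: markov_op_const)
next
  case False
  then have L: "0 < L" using lipschitz_on_nonneg[OF h] by simp
  interpret prob_space "P z" by (rule prob_space_P)
  define g where "g y = h y / L" for y
  have g: "1-lipschitz_on UNIV g"
    using lipschitz_on_cmult_real[OF h, of "1 / L"] L by (simp add: g_def)
  have h_eq: "h = (\<lambda>y. L * g y)" using L by (auto simp: g_def)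
  have Pscale: "markov_op (\<lambda>y. L * g y) = (\<lambda>y. L * markov_op g y)"
    using markov_op_affine[OF g, of 0 L] by simp
  have "ennreal (2 * (\<integral>y. (g y - markov_op g z)\<^sup>2 \<partial>P z))
      = (\<integral>\<^sup>+y. \<integral>\<^sup>+w. ennreal ((g y - g w)\<^sup>2) \<partial>P z \<partial>P z)"
    using nn_integral_square_diff_eq[OF integrable_lipschitz[OF g] integrable_square_lipschitz[OF sigma2_finite g]]
    by (simp add: markov_op_def)
  also have "\<dots> \<le> ennreal (2 * \<kappa> * S z)" by (rule double_integral_square_diff_le[OF g])
  finally have var_g: "(\<integral>y. (g y - markov_op g z)\<^sup>2 \<partial>P z) \<le> \<kappa> * S z"
    using kappa_pos S_nonneg[of z] by (simp add: ennreal_le_iff)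
  have "(\<integral>y. (h y - markov_op h z)\<^sup>2 \<partial>P z) = L\<^sup>2 * (\<integral>y. (g y - markov_op g z)\<^sup>2 \<partial>P z)"
    by (subst (1 2) h_eq) (simp add: Pscale power_mult_distrib flip: right_diff_distrib)
  then show ?thesis
    using mult_left_mono[OF var_g, of "L\<^sup>2"] by (simp add: ac_simps)
qed

lemma nn_integral_square_shift:
  assumes g: "L-lipschitz_on UNIV g"
  shows "(\<integral>\<^sup>+y. ennreal ((c + g y)\<^sup>2) \<partial>P z)
           = ennreal ((\<integral>y. (g y - markov_op g z)\<^sup>2 \<partial>P z) + (c + markov_op g z)\<^sup>2)"
proof -
  interpret prob_space "P z" by (rule prob_space_P)
  have g1: "integrable (P z) g" and g2: "integrable (P z) (\<lambda>y. (g y)\<^sup>2)"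
    using integrable_lipschitz[OF g] integrable_square_lipschitz[OF sigma2_finite g] .
  have "(\<integral>y. (c + g y)\<^sup>2 \<partial>P z) = (\<integral>y. (g y - markov_op g z)\<^sup>2 \<partial>P z) + (c + markov_op g z)\<^sup>2"
    using integral_square_diff_const[OF g1 g2, of "- c"] integral_square_diff_const[OF g1 g2, of "markov_op g z"]
    by (simp add: markov_op_def power2_eq_square algebra_simps)
  moreover have "integrable (P z) (\<lambda>y. (c + g y)\<^sup>2)"
    using g1 g2 by (auto simp: power2_sum)
  ultimately show ?thesis by (subst nn_integral_eq_integral) simp_all
qed

end

locale stationary_diffusion = stationary_kernel P \<kappa> \<pi> + diffusion_bound P \<kappa> C S
  for P :: "'a::polish_space \<Rightarrow> 'a measure" and \<kappa> \<pi> C S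
begin

lemma nn_integral_S_chain_law_finite: "(\<integral>\<^sup>+\<omega>. ennreal (S (\<omega> n)) \<partial>chain_law P x n) < \<top>"
  using nn_integral_chain_law_le[OF S_lip S_nonneg, where k=n and x=x] by (rule le_less_trans) simp

lemma nn_integral_square_sum_chain_law_Suc_le:
  assumes f: "\<And>k. (L k)-lipschitz_on UNIV (f k)"
  shows "(\<integral>\<^sup>+\<omega>. ennreal (((\<Sum>k\<le>Suc n. f k (\<omega> k)) - a)\<^sup>2) \<partial>chain_law P x (Suc n))
     \<le> ennreal (\<kappa> * (L (Suc n))\<^sup>2) * (\<integral>\<^sup>+\<omega>. ennreal (S (\<omega> n)) \<partial>chain_law P x n)
       + (\<integral>\<^sup>+\<omega>. ennreal (((\<Sum>k\<le>n. f k (\<omega> k)) + markov_op (f (Suc n)) (\<omega> n) - a)\<^sup>2) \<partial>chain_law P x n)"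
proof -
  define G where "G \<omega> = (\<Sum>k\<le>n. f k (\<omega> k))" for \<omega> :: "nat \<Rightarrow> 'a"
  have Gm: "G \<in> borel_measurable (chain_law P x n)"
    unfolding G_def measurable_cong_sets[OF sets_chain_law refl] by (rule borel_measurable_sum_lipschitz[OF f])
  have Sm: "(\<lambda>\<omega>. S (\<omega> n)) \<in> borel_measurable (chain_law P x n)"
    unfolding measurable_cong_sets[OF sets_chain_law refl] by (rule measurable_lipschitz_component[OF S_lip]) simp
  have Pfm: "(\<lambda>\<omega>. markov_op (f (Suc n)) (\<omega> n)) \<in> borel_measurable (chain_law P x n)"
    unfolding measurable_cong_sets[OF sets_chain_law refl]
    by (rule measurable_lipschitz_component[OF markov_op_lipschitz[OF f]]) simp
  have "(\<lambda>\<omega>. ennreal (((\<Sum>k\<le>Suc n. f k (\<omega> k)) - a)\<^sup>2)) \<in> borel_measurable (PiM {..Suc n} (\<lambda>_. borel))"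
    using borel_measurable_sum_lipschitz[OF f, where n="Suc n"] by measurable
  then have "(\<integral>\<^sup>+\<omega>. ennreal (((\<Sum>k\<le>Suc n. f k (\<omega> k)) - a)\<^sup>2) \<partial>chain_law P x (Suc n))
      = (\<integral>\<^sup>+\<omega>. \<integral>\<^sup>+y. ennreal (((G \<omega> - a) + f (Suc n) y)\<^sup>2) \<partial>P (\<omega> n) \<partial>chain_law P x n)"
    by (simp add: nn_integral_chain_law_Suc G_def algebra_simps del: chain_law.simps)
  also have "\<dots> = (\<integral>\<^sup>+\<omega>. ennreal ((\<integral>y. (f (Suc n) y - markov_op (f (Suc n)) (\<omega> n))\<^sup>2 \<partial>P (\<omega> n))
                        + (G \<omega> - a + markov_op (f (Suc n)) (\<omega> n))\<^sup>2) \<partial>chain_law P x n)"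
    by (simp add: nn_integral_square_shift[OF f])
  also have "\<dots> \<le> (\<integral>\<^sup>+\<omega>. ennreal (\<kappa> * (L (Suc n))\<^sup>2) * ennreal (S (\<omega> n))
                  + ennreal ((G \<omega> + markov_op (f (Suc n)) (\<omega> n) - a)\<^sup>2) \<partial>chain_law P x n)"
    using variance_markov_op_le[OF f] kappa_pos S_nonneg
    by (intro nn_integral_mono) (simp add: ennreal_mult[symmetric] ennreal_plus[symmetric] del: ennreal_plus add: algebra_simps)
  also have "\<dots> = ennreal (\<kappa> * (L (Suc n))\<^sup>2) * (\<integral>\<^sup>+\<omega>. ennreal (S (\<omega> n)) \<partial>chain_law P x n)
       + (\<integral>\<^sup>+\<omega>. ennreal ((G \<omega> + markov_op (f (Suc n)) (\<omega> n) - a)\<^sup>2) \<partial>chain_law P x n)"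
    using Sm Gm Pfm by (simp add: nn_integral_add nn_integral_cmult)
  finally show ?thesis by (simp add: G_def)
qed

lemma nn_integral_square_sum_chain_law_finite:
  assumes "\<And>k. (L k)-lipschitz_on UNIV (f k)"
  shows "(\<integral>\<^sup>+\<omega>. ennreal (((\<Sum>k\<le>n. f k (\<omega> k)) - a)\<^sup>2) \<partial>chain_law P x n) < \<top>"
  using assms
proof (induction n arbitrary: f L)
  case 0
  have "(\<lambda>\<omega>. ennreal ((f 0 (\<omega> 0) - a)\<^sup>2)) \<in> borel_measurable (PiM {0::nat} (\<lambda>_. borel))"
    using borel_measurable_lipschitz[OF "0"[of 0]] by measurable
  from nn_integral_return[OF _ this] show ?case by (simp add: space_PiM)
next
  case (Suc n)
  define f' where "f' = f(n := \<lambda>z. f n z + markov_op (f (Suc n)) z)"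
  define L' where "L' = L(n := L n + L (Suc n) * (1 - \<kappa>))"
  have f': "(L' k)-lipschitz_on UNIV (f' k)" for k
    unfolding f'_def L'_def by (rule lipschitz_absorb_markov_op[OF Suc.prems])
  have "(\<integral>\<^sup>+\<omega>. ennreal (((\<Sum>k\<le>n. f k (\<omega> k)) + markov_op (f (Suc n)) (\<omega> n) - a)\<^sup>2) \<partial>chain_law P x n) < \<top>"
    using Suc.IH[of L' f', OF f'] unfolding f'_def by (simp only: sum_atMost_fun_upd_add)
  then show ?case
    by (intro le_less_trans[OF nn_integral_square_sum_chain_law_Suc_le[OF Suc.prems]])
       (use nn_integral_S_chain_law_finite[where n=n and x=x] in \<open>simp add: ennreal_mult_less_top\<close>)
qed

lemma variance_sum_chain_law_Suc_le:
  fixes f :: "nat \<Rightarrow> 'a \<Rightarrow> real" and L :: "nat \<Rightarrow> real" and n :: nat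
  assumes f: "\<And>k. (L k)-lipschitz_on UNIV (f k)"
  defines "g \<equiv> f(n := \<lambda>z. f n z + markov_op (f (Suc n)) z)"
  shows "(\<integral>\<omega>. ((\<Sum>k\<le>Suc n. f k (\<omega> k))
            - (\<integral>\<omega>'. (\<Sum>k\<le>Suc n. f k (\<omega>' k)) \<partial>chain_law P x (Suc n)))\<^sup>2 \<partial>chain_law P x (Suc n))
     \<le> \<kappa> * (L (Suc n))\<^sup>2 * enn2real (\<integral>\<^sup>+\<omega>. ennreal (S (\<omega> n)) \<partial>chain_law P x n)
       + (\<integral>\<omega>. ((\<Sum>k\<le>n. g k (\<omega> k)) - (\<integral>\<omega>'. (\<Sum>k\<le>n. g k (\<omega>' k)) \<partial>chain_law P x n))\<^sup>2 \<partial>chain_law P x n)"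
proof -
  have g: "((L(n := L n + L (Suc n) * (1 - \<kappa>))) k)-lipschitz_on UNIV (g k)" for k
    unfolding g_def by (rule lipschitz_absorb_markov_op[OF f])
  define \<Psi> where "\<Psi> \<omega> = (\<Sum>k\<le>n. g k (\<omega> k))" for \<omega> :: "nat \<Rightarrow> 'a"
  define a where "a = (\<integral>\<omega>. \<Psi> \<omega> \<partial>chain_law P x n)"
  define ES where "ES = (\<integral>\<^sup>+\<omega>. ennreal (S (\<omega> n)) \<partial>chain_law P x n)"
  define Y where "Y = (\<integral>\<^sup>+\<omega>. ennreal ((\<Psi> \<omega> - a)\<^sup>2) \<partial>chain_law P x n)"
  have ES: "ES < \<top>" unfolding ES_def by (rule nn_integral_S_chain_law_finite)
  have Y: "Y < \<top>" unfolding Y_def \<Psi>_def by (rule nn_integral_square_sum_chain_law_finite[OF g])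
  have \<Psi>m: "\<Psi> \<in> borel_measurable (chain_law P x n)"
    unfolding \<Psi>_def measurable_cong_sets[OF sets_chain_law refl] by (rule borel_measurable_sum_lipschitz[OF g])
  interpret prob_space "chain_law P x (Suc n)" by (rule prob_space_chain_law)
  have "variance (\<lambda>\<omega>. \<Sum>k\<le>Suc n. f k (\<omega> k))
      \<le> enn2real (\<integral>\<^sup>+\<omega>. ennreal (((\<Sum>k\<le>Suc n. f k (\<omega> k)) - a)\<^sup>2) \<partial>chain_law P x (Suc n))"
    by (rule variance_le_nn_integral_square, unfold measurable_cong_sets[OF sets_chain_law refl])
       (rule borel_measurable_sum_lipschitz[OF f])
  also have "\<dots> \<le> enn2real (ennreal (\<kappa> * (L (Suc n))\<^sup>2) * ES + Y)"
  proof (rule enn2real_mono)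
    show "ennreal (\<kappa> * (L (Suc n))\<^sup>2) * ES + Y < \<top>" using ES Y by (simp add: ennreal_mult_less_top)
    show "(\<integral>\<^sup>+\<omega>. ennreal (((\<Sum>k\<le>Suc n. f k (\<omega> k)) - a)\<^sup>2) \<partial>chain_law P x (Suc n))
        \<le> ennreal (\<kappa> * (L (Suc n))\<^sup>2) * ES + Y"
      using nn_integral_square_sum_chain_law_Suc_le[OF f, where n=n and x=x and a=a]
      unfolding ES_def Y_def \<Psi>_def g_def by (simp only: sum_atMost_fun_upd_add)
  qed
  also have "\<dots> = \<kappa> * (L (Suc n))\<^sup>2 * enn2real ES + enn2real Y"
    using ES Y kappa_pos by (simp add: enn2real_plus ennreal_mult_less_top enn2real_mult)
  also have "enn2real Y = (\<integral>\<omega>. (\<Psi> \<omega> - a)\<^sup>2 \<partial>chain_law P x n)"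
    unfolding Y_def by (subst integral_eq_nn_integral) (use \<Psi>m in auto)
  finally show ?thesis by (simp add: ES_def a_def \<Psi>_def)
qed

lemma variance_sum_chain_law_le:
  assumes "\<And>k. (L k)-lipschitz_on UNIV (f k)"
  shows "(\<integral>\<omega>. ((\<Sum>k\<le>n. f k (\<omega> k)) - (\<integral>\<omega>'. (\<Sum>k\<le>n. f k (\<omega>' k)) \<partial>chain_law P x n))\<^sup>2 \<partial>chain_law P x n)
     \<le> (\<Sum>k\<in>{1..n}. \<kappa> * (tail_weight L n k)\<^sup>2 * enn2real (\<integral>\<^sup>+\<omega>. ennreal (S (\<omega> (k - 1))) \<partial>chain_law P x (k - 1)))"
  using assms
proof (induction n arbitrary: f L)
  case 0
  have x: "(\<lambda>i\<in>{0::nat}. x) \<in> space (PiM {0::nat} (\<lambda>_. borel))" by (simp add: space_PiM)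
  have m: "(\<lambda>\<omega>. f 0 (\<omega> 0)) \<in> borel_measurable (PiM {0::nat} (\<lambda>_. borel))"
    using borel_measurable_lipschitz[OF "0"[of 0]] by measurable
  have m2: "(\<lambda>\<omega>. (f 0 (\<omega> 0) - c)\<^sup>2) \<in> borel_measurable (PiM {0::nat} (\<lambda>_. borel))" for c
    using m by measurable
  show ?case using integral_return[OF x m] integral_return[OF x m2[of "f 0 x"]] by simp
next
  case (Suc n)
  define f' where "f' = f(n := \<lambda>z. f n z + markov_op (f (Suc n)) z)"
  define L' where "L' = L(n := L n + L (Suc n) * (1 - \<kappa>))"
  have f': "(L' k)-lipschitz_on UNIV (f' k)" for k
    unfolding f'_def L'_def by (rule lipschitz_absorb_markov_op[OF Suc.prems])
  have "(\<integral>\<omega>. ((\<Sum>k\<le>Suc n. f k (\<omega> k))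
            - (\<integral>\<omega>'. (\<Sum>k\<le>Suc n. f k (\<omega>' k)) \<partial>chain_law P x (Suc n)))\<^sup>2 \<partial>chain_law P x (Suc n))
     \<le> \<kappa> * (L (Suc n))\<^sup>2 * enn2real (\<integral>\<^sup>+\<omega>. ennreal (S (\<omega> n)) \<partial>chain_law P x n)
       + (\<integral>\<omega>. ((\<Sum>k\<le>n. f' k (\<omega> k)) - (\<integral>\<omega>'. (\<Sum>k\<le>n. f' k (\<omega>' k)) \<partial>chain_law P x n))\<^sup>2 \<partial>chain_law P x n)"
    unfolding f'_def by (rule variance_sum_chain_law_Suc_le[OF Suc.prems])
  also have "\<dots> \<le> \<kappa> * (L (Suc n))\<^sup>2 * enn2real (\<integral>\<^sup>+\<omega>. ennreal (S (\<omega> n)) \<partial>chain_law P x n)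
       + (\<Sum>k\<in>{1..n}. \<kappa> * (tail_weight L' n k)\<^sup>2
            * enn2real (\<integral>\<^sup>+\<omega>. ennreal (S (\<omega> (k - 1))) \<partial>chain_law P x (k - 1)))"
    using Suc.IH[OF f'] by simp
  also have "(\<Sum>k\<in>{1..n}. \<kappa> * (tail_weight L' n k)\<^sup>2
                * enn2real (\<integral>\<^sup>+\<omega>. ennreal (S (\<omega> (k - 1))) \<partial>chain_law P x (k - 1)))
      = (\<Sum>k\<in>{1..n}. \<kappa> * (tail_weight L (Suc n) k)\<^sup>2
                * enn2real (\<integral>\<^sup>+\<omega>. ennreal (S (\<omega> (k - 1))) \<partial>chain_law P x (k - 1)))"
    by (intro sum.cong refl) (simp add: tail_weight_Suc L'_def)
  finally show ?case by (simp add: tail_weight_last algebra_simps)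
qed

lemma nn_integral_S_chain_law_le:
  "enn2real (\<integral>\<^sup>+\<omega>. ennreal (S (\<omega> k)) \<partial>chain_law P x k)
     \<le> (\<integral>y. S y \<partial>\<pi>) + C * (1 - \<kappa>) ^ k * eccentricity \<pi> x"
proof -
  interpret pi: prob_space \<pi> by (rule pi_prob)
  have "0 \<le> (\<integral>y. S y \<partial>\<pi>) + C * (1 - \<kappa>) ^ k * eccentricity \<pi> x"
    using S_nonneg lipschitz_on_nonneg[OF S_lip] one_minus_kappa_nonneg
    by (auto simp: eccentricity_def intro!: add_nonneg_nonneg mult_nonneg_nonneg)
  then show ?thesis
    using enn2real_mono[OF nn_integral_chain_law_le[OF S_lip S_nonneg, where k=k and x=x]] by simp
qed

lemma sum_tail_weight_average_le:
  fixes T T0 :: nat and l :: real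
  assumes T: "1 \<le> T" and l: "0 \<le> l"
  defines "w \<equiv> \<lambda>j. if T0 + 1 \<le> j then l / real T else 0"
  shows "(\<Sum>k\<in>{1..T0 + T}. \<kappa> * (tail_weight w (T0 + T) k)\<^sup>2
            * enn2real (\<integral>\<^sup>+\<omega>. ennreal (S (\<omega> (k - 1))) \<partial>chain_law P x (k - 1)))
     \<le> l\<^sup>2 / ((real T)\<^sup>2 * \<kappa>) *
        (if T0 = 0 then real T * (\<integral>y. S y \<partial>\<pi>) + C * eccentricity \<pi> x / \<kappa>
         else (real T + 1 / \<kappa>) * (\<integral>y. S y \<partial>\<pi>) + 2 * C * (1 - \<kappa>) ^ T0 * eccentricity \<pi> x / \<kappa>)"
proof -
  interpret pi: prob_space \<pi> by (rule pi_prob)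
  define ES where "ES = (\<integral>y. S y \<partial>\<pi>)"
  define Ecc where "Ecc = eccentricity \<pi> x"
  have ES: "0 \<le> ES" unfolding ES_def using S_nonneg by simp
  have Ecc: "0 \<le> Ecc" unfolding Ecc_def eccentricity_def by simp
  have "(\<Sum>k\<in>{1..T0 + T}. \<kappa> * (tail_weight w (T0 + T) k)\<^sup>2
            * enn2real (\<integral>\<^sup>+\<omega>. ennreal (S (\<omega> (k - 1))) \<partial>chain_law P x (k - 1)))
      \<le> (\<Sum>k\<in>{1..T0 + T}. \<kappa> * (l / (real T * \<kappa>) * (1 - \<kappa>) ^ (T0 + 1 - k))\<^sup>2
            * (ES + C * (1 - \<kappa>) ^ (k - 1) * Ecc))"
  proof (rule sum_mono)
    fix k assume k: "k \<in> {1..T0 + T}"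
    have "0 \<le> tail_weight w (T0 + T) k"
      using l by (intro tail_weight_nonneg) (simp add: w_def)
    then have "(tail_weight w (T0 + T) k)\<^sup>2 \<le> (l / (real T * \<kappa>) * (1 - \<kappa>) ^ (T0 + 1 - k))\<^sup>2"
      using tail_weight_average_le[OF T l, of k] k unfolding w_def by (intro power_mono) auto
    then show "\<kappa> * (tail_weight w (T0 + T) k)\<^sup>2 * enn2real (\<integral>\<^sup>+\<omega>. ennreal (S (\<omega> (k - 1))) \<partial>chain_law P x (k - 1))
        \<le> \<kappa> * (l / (real T * \<kappa>) * (1 - \<kappa>) ^ (T0 + 1 - k))\<^sup>2 * (ES + C * (1 - \<kappa>) ^ (k - 1) * Ecc)"
      using nn_integral_S_chain_law_le[where k="k - 1" and x=x] kappa_pos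
      unfolding ES_def Ecc_def by (intro mult_mono) auto
  qed
  also have "\<dots> = l\<^sup>2 / ((real T)\<^sup>2 * \<kappa>) *
      (\<Sum>k\<in>{1..T0 + T}. ((1 - \<kappa>) ^ (T0 + 1 - k))\<^sup>2 * (ES + C * (1 - \<kappa>) ^ (k - 1) * Ecc))"
    unfolding sum_distrib_left
    by (intro sum.cong refl) (use kappa_pos T in \<open>simp add: power2_eq_square field_simps\<close>)
  also have "\<dots> \<le> l\<^sup>2 / ((real T)\<^sup>2 * \<kappa>) *
      (if T0 = 0 then real T * ES + C * Ecc / \<kappa>
       else (real T + 1 / \<kappa>) * ES + 2 * C * (1 - \<kappa>) ^ T0 * Ecc / \<kappa>)"
    using weighted_geometric_sum_le[OF ES lipschitz_on_nonneg[OF S_lip] Ecc] kappa_pos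
    by (intro mult_left_mono) simp_all
  finally show ?thesis unfolding ES_def[symmetric] Ecc_def[symmetric] .
qed

lemma variance_ergodic_average_le:
  fixes T T0 :: nat and l :: real and f :: "'a \<Rightarrow> real"
  assumes T: "1 \<le> T" and f: "l-lipschitz_on UNIV f"
  shows "(let M = chain_law P x (T0 + T);
              F = (\<lambda>\<omega>. (1 / real T) * (\<Sum>k\<in>{T0+1..T0+T}. f (\<omega> k)));
              Var = (\<integral> \<omega>. (F \<omega> - (\<integral> \<omega>'. F \<omega>' \<partial>M))\<^sup>2 \<partial>M)
          in Var \<le> (if T0 = 0
                     then l\<^sup>2 / (\<kappa> * real T) *
                            ((\<integral> y. S y \<partial>\<pi>) + C / (\<kappa> * real T) * eccentricity \<pi> x)
                     else l\<^sup>2 / (\<kappa> * real T) *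
                            ((1 + 1 / (\<kappa> * real T)) * (\<integral> y. S y \<partial>\<pi>)
                             + 2 * C * (1 - \<kappa>) ^ T0 / (\<kappa> * real T) * eccentricity \<pi> x)))"
proof -
  define w where "w j = (if T0 + 1 \<le> j then l / real T else 0)" for j
  define g where "g j z = (if T0 + 1 \<le> j then f z / real T else 0)" for j z
  have g: "(w k)-lipschitz_on UNIV (g k)" for k
    using lipschitz_on_cmult_real[OF f, of "1 / real T"] T
    by (cases "T0 + 1 \<le> k") (simp_all add: w_def g_def lipschitz_on_constant)
  have F: "(\<lambda>\<omega>. (1 / real T) * (\<Sum>k\<in>{T0+1..T0+T}. f (\<omega> k))) = (\<lambda>\<omega>. \<Sum>k\<le>T0 + T. g k (\<omega> k))"
  proof
    fix \<omega> :: "nat \<Rightarrow> 'a"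
    have "{k\<in>{..T0 + T}. T0 + 1 \<le> k} = {T0+1..T0+T}" by auto
    then show "(1 / real T) * (\<Sum>k\<in>{T0+1..T0+T}. f (\<omega> k)) = (\<Sum>k\<le>T0 + T. g k (\<omega> k))"
      by (simp add: g_def sum.inter_filter[symmetric] sum_divide_distrib)
  qed
  have "(\<integral>\<omega>. ((\<Sum>k\<le>T0 + T. g k (\<omega> k))
        - (\<integral>\<omega>'. (\<Sum>k\<le>T0 + T. g k (\<omega>' k)) \<partial>chain_law P x (T0 + T)))\<^sup>2 \<partial>chain_law P x (T0 + T))
      \<le> (\<Sum>k\<in>{1..T0 + T}. \<kappa> * (tail_weight w (T0 + T) k)\<^sup>2
            * enn2real (\<integral>\<^sup>+\<omega>. ennreal (S (\<omega> (k - 1))) \<partial>chain_law P x (k - 1)))"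
    by (rule variance_sum_chain_law_le[OF g])
  also have "\<dots> \<le> l\<^sup>2 / ((real T)\<^sup>2 * \<kappa>) *
        (if T0 = 0 then real T * (\<integral>y. S y \<partial>\<pi>) + C * eccentricity \<pi> x / \<kappa>
         else (real T + 1 / \<kappa>) * (\<integral>y. S y \<partial>\<pi>) + 2 * C * (1 - \<kappa>) ^ T0 * eccentricity \<pi> x / \<kappa>)"
    unfolding w_def[abs_def] by (rule sum_tail_weight_average_le[OF T lipschitz_on_nonneg[OF f]])
  also have "\<dots> = (if T0 = 0
                     then l\<^sup>2 / (\<kappa> * real T) *
                            ((\<integral> y. S y \<partial>\<pi>) + C / (\<kappa> * real T) * eccentricity \<pi> x)
                     else l\<^sup>2 / (\<kappa> * real T) *
                            ((1 + 1 / (\<kappa> * real T)) * (\<integral> y. S y \<partial>\<pi>)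
                             + 2 * C * (1 - \<kappa>) ^ T0 / (\<kappa> * real T) * eccentricity \<pi> x))"
    using kappa_pos T by (simp add: power2_eq_square field_simps)
  finally show ?thesis unfolding Let_def F .
qed

end

theorem theorem3:
  fixes P :: "'a::polish_space \<Rightarrow> 'a measure"
    and \<pi> :: "'a measure"
    and \<kappa> C :: real
    and T T0 :: nat
    and S f :: "'a \<Rightarrow> real"
    and x :: 'a
  assumes kernel: "P \<in> borel \<rightarrow>\<^sub>M prob_algebra borel"
    and first_moment: "\<And>z. integrable (P z) (\<lambda>y. dist z y)"
    and kappa_pos: "\<kappa> > 0"
    and contraction: "\<And>y z. W1 (P y) (P z) \<le> ereal ((1 - \<kappa>) * dist y z)"
    and pi_prob: "prob_space \<pi>" and pi_sets: "sets \<pi> = sets borel"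
    and pi_inv: "\<pi> \<bind> P = \<pi>"
    and T_ge: "T \<ge> 1"
    and S_lip: "lipschitz_on C UNIV S"
    and S_bound: "\<And>z. sigma2 P z < \<infinity> \<and>
                       enn2ereal (sigma2 P z / (n_loc P z * ennreal \<kappa>)) \<le> ereal (S z)"
    and f_lip: "is_lipschitz f"
  shows "(let M = chain_law P x (T0 + T);
              F = (\<lambda>\<omega>. (1 / real T) * (\<Sum>k\<in>{T0+1..T0+T}. f (\<omega> k)));
              Var = (\<integral> \<omega>. (F \<omega> - (\<integral> \<omega>'. F \<omega>' \<partial>M))\<^sup>2 \<partial>M)
          in Var \<le> (if T0 = 0
                     then (lip_norm f)\<^sup>2 / (\<kappa> * real T) *
                            ((\<integral> y. S y \<partial>\<pi>) + C / (\<kappa> * real T) * eccentricity \<pi> x)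
                     else (lip_norm f)\<^sup>2 / (\<kappa> * real T) *
                            ((1 + 1 / (\<kappa> * real T)) * (\<integral> y. S y \<partial>\<pi>)
                             + 2 * C * (1 - \<kappa>) ^ T0 / (\<kappa> * real T) * eccentricity \<pi> x)))"
proof (cases "\<kappa> \<le> 1")
  case True
  interpret stationary_diffusion P \<kappa> \<pi> C S
    by (intro stationary_diffusion.intro stationary_kernel.intro diffusion_bound.intro
          contracting_kernel.intro markov_kernel.intro
          stationary_kernel_axioms.intro contracting_kernel_axioms.intro diffusion_bound_axioms.intro)
       (fact kernel first_moment kappa_pos True contraction pi_prob pi_sets pi_inv S_lip S_bound)+
  show ?thesis by (rule variance_ergodic_average_le[OF T_ge lipschitz_on_lip_norm[OF f_lip]])
next
  case False
  interpret markov_kernel P by (rule markov_kernel.intro[OF kernel])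
  interpret prob_space "chain_law P x (T0 + T)" by (rule prob_space_chain_law)
  from False have single_point: "y = z" for y z :: 'a
    by (intro W1_contraction_gt_one_imp_eq[OF contraction]) simp
  then have "lip_norm f = 0" by (simp add: lip_norm_def)
  moreover have "f (\<omega> k) = f x" for \<omega> :: "nat \<Rightarrow> 'a" and k by (simp only: single_point[of "\<omega> k" x])
  ultimately show ?thesis by (simp add: Let_def prob_space)
qed

end
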